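(* Let $1\le p<\infty$, $q=p(p-1)^{-1}$, $\beta\ge 0$, $r\in\mathbb{N}$, let $f\in L^{p}$, let $x\in\mathbb{R}$, and let $\omega$ be a function of the modulus of continuity type. Put $M_r=\{0,1,\dots,[r/2]\}$ if $r$ is odd and $M_r=\{0,1,\dots,[r/2]-1\}$ if $r$ is even. Assume there are $\gamma$ with $0<\gamma<\beta+\frac1p$ and a constant $C$ (possibly depending on $x$, but not on $n$) such that for all integers $n\ge 0$: (i) $\left\{\int_{0}^{\frac{\pi}{r(n+1)}}\left(\frac{\omega(t)}{t\sin^{\beta}\frac{rt}{2}}\right)^{q}dt\right\}^{1/q}\le C(n+1)^{\beta+1/p}\,\omega\!\left(\frac{\pi}{n+1}\right)$; (ii) for every $m\in M_r$: $\left\{\int_{\frac{2m\pi}{r}}^{\frac{2m\pi}{r}+\frac{\pi}{r(n+1)}}\left(\frac{|\varphi_x(t)|}{\omega(t)}\right)^{p}\left|\sin\frac{rt}{2}\right|^{\beta p}dt\right\}^{1/p}\le C(n+1)^{-1/p}$; (iii) for every $m\in M_r$: $\left\{\int_{\frac{2m\pi}{r}+\frac{\pi}{r(n+1)}}^{\frac{2m\pi}{r}+\frac{\pi}{r}}\left(\frac{|\varphi_x(t)|\,|\sin\frac{rt}{2}|^{\beta}}{\omega(t)\,(t-\frac{2m\pi}{r})^{\gamma}}\right)^{p}dt\right\}^{1/p}\le C(n+1)^{\gamma}$; (iv) if $r\ge 2$, then for every $m\in\{0,1,\dots,[r/2]-1\}$: $\left\{\int_{\frac{2(m+1)\pi}{r}-\frac{\pi}{r(n+1)}}^{\frac{2(m+1)\pi}{r}}\left(\frac{|\varphi_x(t)|}{\omega(t)}\right)^{p}\left|\sin\frac{rt}{2}\right|^{\beta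 p}dt\right\}^{1/p}\le C(n+1)^{-1/p}$ and $\left\{\int_{\frac{2(m+1)\pi}{r}-\frac{\pi}{r}}^{\frac{2(m+1)\pi}{r}-\frac{\pi}{r(n+1)}}\left(\frac{|\varphi_x(t)|\,|\sin\frac{rt}{2}|^{\beta}}{\omega(t)\,(\frac{2(m+1)\pi}{r}-t)^{\gamma}}\right)^{p}dt\right\}^{1/p}\le C(n+1)^{\gamma}$; (v) the matrix $A$ satisfies $\left[\sum_{l=0}^{n}\sum_{k=l}^{r+l-1}a_{n,k}\right]^{-1}\le C$. Then there is a constant $C'$ (possibly depending on $x$) such that for all $n\ge 0$, $$\left|T_{n,A}f(x)-f(x)\right|\le C'(n+1)^{\beta+\frac1p+1}A_{n,r}\,\omega\!\left(\frac{\pi}{n+1}\right).$$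
   Context: $L^{p}$ ($1\le p<\infty$) is the space of $2\pi$-periodic real functions that are Lebesgue integrable with $p$-th power over $[-\pi,\pi]$. For $f\in L^1$, $S_kf(x)=\frac{a_0(f)}2+\sum_{\nu=1}^{k}(a_\nu(f)\cos\nu x+b_\nu(f)\sin\nu x)$ is the $k$-th partial sum of the trigonometric Fourier series of $f$. $A=(a_{n,k})_{n,k\ge0}$ is an infinite real matrix with $a_{n,k}\ge0$, $\lim_{n\to\infty}a_{n,k}=0$ for each $k$, and $\sum_{k=0}^\infty a_{n,k}=1$ for each $n$; $T_{n,A}f(x)=\sum_{k=0}^{\infty}a_{n,k}S_kf(x)$, and $A_{n,r}=\sum_{k=0}^{\infty}|a_{n,k}-a_{n,k+r}|$. Also $\varphi_x(t)=f(x+t)+f(x-t)-2f(x)$. A function of the modulus of continuity type is a nondecreasing continuous function $\omega$ on $[0,2\pi]$ with $\omega(0)=0$ and $\omega(\delta_1+\delta_2)\le\omega(\delta_1)+\omega(\delta_2)$ whenever $0\le\delta_1\le\delta_2\le\delta_1+\delta_2\le2\pi$. $[y]$ denotes the integer part of $y$. When $p=1$ (so $q=\infty$), $\{\int g^q\}^{1/q}$ is read as the essential supremum of $g$. *)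

theory Defs
  imports "HOL-Analysis.Analysis"
begin

definition in_Lp :: "real \<Rightarrow> (real \<Rightarrow> real) \<Rightarrow> bool" where
  "in_Lp p f \<longleftrightarrow> f \<in> borel_measurable lborel \<and> (\<forall>t. f (t + 2 * pi) = f t)
     \<and> set_integrable lborel {-pi..pi} (\<lambda>t. \<bar>f t\<bar> powr p)"

definition fourier_a :: "(real \<Rightarrow> real) \<Rightarrow> nat \<Rightarrow> real" where
  "fourier_a f \<nu> = (LBINT t:{-pi..pi}. f t * cos (real \<nu> * t)) / pi"

definition fourier_b :: "(real \<Rightarrow> real) \<Rightarrow> nat \<Rightarrow> real" where
  "fourier_b f \<nu> = (LBINT t:{-pi..pi}. f t * sin (real \<nu> * t)) / pi"

definition fourier_partial_sum :: "(real \<Rightarrow> real) \<Rightarrow> nat \<Rightarrow> real \<Rightarrow> real" where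
  "fourier_partial_sum f k x = fourier_a f 0 / 2
     + (\<Sum>\<nu>=1..k. fourier_a f \<nu> * cos (real \<nu> * x) + fourier_b f \<nu> * sin (real \<nu> * x))"

definition summation_matrix :: "(nat \<Rightarrow> nat \<Rightarrow> real) \<Rightarrow> bool" where
  "summation_matrix a \<longleftrightarrow> (\<forall>n k. a n k \<ge> 0) \<and> (\<forall>k. (\<lambda>n. a n k) \<longlonglongrightarrow> 0)
     \<and> (\<forall>n. (\<lambda>k. a n k) sums 1)"

definition T_mean :: "(nat \<Rightarrow> nat \<Rightarrow> real) \<Rightarrow> (real \<Rightarrow> real) \<Rightarrow> nat \<Rightarrow> real \<Rightarrow> real" where
  "T_mean a f n x = (\<Sum>k. a n k * fourier_partial_sum f k x)"

definition A_var :: "(nat \<Rightarrow> nat \<Rightarrow> real) \<Rightarrow> nat \<Rightarrow> nat \<Rightarrow> real" where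
  "A_var a n r = (\<Sum>k. \<bar>a n k - a n (k + r)\<bar>)"

definition phi :: "(real \<Rightarrow> real) \<Rightarrow> real \<Rightarrow> real \<Rightarrow> real" where
  "phi f x t = f (x + t) + f (x - t) - 2 * f x"

definition modulus_type :: "(real \<Rightarrow> real) \<Rightarrow> bool" where
  "modulus_type \<omega> \<longleftrightarrow> mono_on {0..2*pi} \<omega> \<and> continuous_on {0..2*pi} \<omega> \<and> \<omega> 0 = 0
     \<and> (\<forall>d1 d2. 0 \<le> d1 \<and> d1 \<le> d2 \<and> d1 + d2 \<le> 2*pi \<longrightarrow> \<omega> (d1 + d2) \<le> \<omega> d1 + \<omega> d2)"

text \<open>{ int_S |g|^s }^(1/s) <= X  (for X >= 0, 1 <= s < infinity), stated via the
  nonnegative Lebesgue integral so that an infinite integral violates the bound.\<close>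
definition Lnorm_le :: "real \<Rightarrow> real set \<Rightarrow> (real \<Rightarrow> real) \<Rightarrow> real \<Rightarrow> bool" where
  "Lnorm_le s S g X \<longleftrightarrow> 0 \<le> X \<and>
     set_nn_integral lborel S (\<lambda>t. ennreal (\<bar>g t\<bar> powr s)) \<le> ennreal (X powr s)"

definition esssup_le :: "real set \<Rightarrow> (real \<Rightarrow> real) \<Rightarrow> real \<Rightarrow> bool" where
  "esssup_le S g X \<longleftrightarrow> (AE t in lborel. t \<in> S \<longrightarrow> \<bar>g t\<bar> \<le> X)"

definition dual_norm_le :: "real \<Rightarrow> real set \<Rightarrow> (real \<Rightarrow> real) \<Rightarrow> real \<Rightarrow> bool" where
  "dual_norm_le p S g X \<longleftrightarrow>
     (if p = 1 then esssup_le S g X else Lnorm_le (p / (p - 1)) S g X)"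

definition M_set :: "nat \<Rightarrow> nat set" where
  "M_set r = (if odd r then {0 .. r div 2} else {0 ..< r div 2})"

end

theory Submission
  imports Defs
begin

text \<open>
  The partial sums of the Fourier series are integrals against the Dirichlet kernel, so
  \<open>T_{n,A} f x - f x = (1/\<pi>) \<integral>\<^sub>0\<^sup>\<pi> \<phi>\<^sub>x(t) K(t) dt\<close> with the kernel \<open>K = \<Sum>\<^sub>k a_{n,k} D\<^sub>k\<close>
  of the matrix means. This kernel satisfies \<open>\<bar>K t\<bar> \<le> 1 / (2 sin (t/2))\<close> and, by Abel
  summation with step \<open>r\<close> applied to \<open>4 sin (t/2) sin (r t/2) D\<^sub>k(t) = cos ((k + 1/2 - r/2) t) -
  cos ((k + r + 1/2 - r/2) t)\<close>, also \<open>\<bar>K t\<bar> \<le> A' / (4 sin (t/2) \<bar>sin (r t/2)\<bar>)\<close>, where \<open>A'\<close>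
  tends to \<open>A_{n,r} + (a_{n,0} + ... + a_{n,r-1}) \<le> 2 A_{n,r}\<close>.

  The zeros \<open>2 m \<pi> / r\<close> of \<open>sin (r t/2)\<close> cut \<open>[0, \<pi>]\<close> into at most \<open>r + 1\<close> cells of length
  \<open>\<pi> / r\<close>. On each cell the first kernel bound is used within distance \<open>\<delta> = \<pi> / (r (n + 1))\<close>
  of the zero and the second one beyond it, and on both pieces Hoelder's inequality together with
  the hypotheses (i)-(iv) bounds the integral: the near piece by \<open>O((n + 1)\<^bsup>\<beta>\<^esup> \<omega>(\<pi>/(n + 1)))\<close>,
  the far piece by \<open>A'\<close> times \<open>O((n + 1)\<^bsup>\<beta> + 1/p + 1\<^esup> \<omega>(\<pi>/(n + 1)))\<close>. Hypothesis (v) gives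
  \<open>1 \<le> C (n + 1) A_{n,r}\<close>, so the near piece obeys the same bound as the far one.
\<close>

section \<open>Hoelder's inequality for the norm bounds\<close>

lemma Lnorm_le_zero_AE:
  assumes s: "0 < s" and [measurable]: "g \<in> borel_measurable borel" "S \<in> sets borel"
    and L: "Lnorm_le s S g 0"
  shows "AE t in lborel. t \<in> S \<longrightarrow> g t = 0"
proof -
  have "(\<integral>\<^sup>+t\<in>S. ennreal (\<bar>g t\<bar> powr s) \<partial>lborel) = 0"
    using L s by (simp add: Lnorm_le_def)
  then have "AE t in lborel. ennreal (\<bar>g t\<bar> powr s) * indicator S t = 0"
    by (subst (asm) nn_integral_0_iff_AE) auto
  then show ?thesis by eventually_elim (auto simp: indicator_def)
qed

lemma Holder_nn_integral_esssup:
  assumes [measurable]: "S \<in> sets borel" "g \<in> borel_measurable borel" "h \<in> borel_measurable borel"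
    and Lg: "Lnorm_le 1 S g X" and Dh: "esssup_le S h Y"
  shows "(\<integral>\<^sup>+s\<in>S. ennreal (\<bar>g s\<bar> * \<bar>h s\<bar>) \<partial>lborel) \<le> ennreal (X * Y)"
proof -
  have X: "0 \<le> X" and gX: "(\<integral>\<^sup>+s\<in>S. ennreal \<bar>g s\<bar> \<partial>lborel) \<le> ennreal X"
    using Lg by (auto simp: Lnorm_le_def)
  have hY: "AE s in lborel. s \<in> S \<longrightarrow> \<bar>h s\<bar> \<le> Y"
    using Dh by (simp add: esssup_le_def)
  show ?thesis
  proof (cases "Y < 0")
    case True
    have "AE s in lborel. ennreal (\<bar>g s\<bar> * \<bar>h s\<bar>) * indicator S s = 0"
      using hY by eventually_elim (use True in \<open>auto simp: indicator_def\<close>)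
    then show ?thesis by (simp add: nn_integral_0_iff_AE[THEN iffD2])
  next
    case False
    have "(\<integral>\<^sup>+s\<in>S. ennreal (\<bar>g s\<bar> * \<bar>h s\<bar>) \<partial>lborel)
        \<le> (\<integral>\<^sup>+s. ennreal Y * (ennreal \<bar>g s\<bar> * indicator S s) \<partial>lborel)"
      using hY
    proof (intro nn_integral_mono_AE, eventually_elim)
      case (elim s)
      have "ennreal (\<bar>g s\<bar> * \<bar>h s\<bar>) \<le> ennreal (Y * \<bar>g s\<bar>)" if "s \<in> S"
        using elim that mult_left_mono[of "\<bar>h s\<bar>" Y "\<bar>g s\<bar>"] by (intro ennreal_leI) (auto simp: mult.commute)
      then show ?case using False by (auto simp: indicator_def ennreal_mult)
    qed
    also have "\<dots> = ennreal Y * (\<integral>\<^sup>+s\<in>S. ennreal \<bar>g s\<bar> \<partial>lborel)"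
      by (rule nn_integral_cmult) simp
    also have "\<dots> \<le> ennreal Y * ennreal X" by (intro mult_left_mono gX) simp
    also have "\<dots> = ennreal (X * Y)" using X False by (simp add: ennreal_mult mult.commute)
    finally show ?thesis .
  qed
qed

lemma Young_inequality_scaled:
  fixes a b X Y p q :: real
  assumes ab: "0 \<le> a" "0 \<le> b" and XY: "0 < X" "0 < Y"
    and pq: "1 < p" "1 < q" "1/p + 1/q = 1"
  shows "a * b \<le> Y / (p * X powr (p - 1)) * a powr p + X / (q * Y powr (q - 1)) * b powr q"
proof -
  have "(a / X) * (b / Y) \<le> (a / X) powr p / p + (b / Y) powr q / q"
    using Youngs_inequality[OF pq, of "a / X" "b / Y"] ab XY by simp
  then have "X * Y * ((a / X) * (b / Y)) \<le> X * Y * ((a / X) powr p / p + (b / Y) powr q / q)"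
    using XY by (intro mult_left_mono) auto
  also have "X * Y * ((a / X) powr p / p + (b / Y) powr q / q)
      = Y / (p * X powr (p - 1)) * a powr p + X / (q * Y powr (q - 1)) * b powr q"
    using XY pq by (simp add: powr_divide powr_diff field_simps)
  finally show ?thesis using XY by simp
qed

lemma Holder_nn_integral_conjugate:
  assumes [measurable]: "S \<in> sets borel" "g \<in> borel_measurable borel" "h \<in> borel_measurable borel"
    and pq: "1 < p" "1 < q" "1/p + 1/q = 1"
    and Lg: "Lnorm_le p S g X" and Lh: "Lnorm_le q S h Y"
  shows "(\<integral>\<^sup>+s\<in>S. ennreal (\<bar>g s\<bar> * \<bar>h s\<bar>) \<partial>lborel) \<le> ennreal (X * Y)"
proof (cases "X = 0 \<or> Y = 0")
  case True
  then have "AE s in lborel. s \<in> S \<longrightarrow> g s = 0 \<or> h s = 0"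
    using Lnorm_le_zero_AE[of p g S] Lnorm_le_zero_AE[of q h S] Lg Lh pq
    by (auto elim: eventually_mono)
  then have "AE s in lborel. ennreal (\<bar>g s\<bar> * \<bar>h s\<bar>) * indicator S s = 0"
    by eventually_elim (auto simp: indicator_def)
  then show ?thesis by (simp add: nn_integral_0_iff_AE[THEN iffD2])
next
  case False
  then have X: "0 < X" and Y: "0 < Y" using Lg Lh by (auto simp: Lnorm_le_def)
  define c1 where "c1 = Y / (p * X powr (p - 1))"
  define c2 where "c2 = X / (q * Y powr (q - 1))"
  have c: "0 \<le> c1" "0 \<le> c2" using X Y pq by (auto simp: c1_def c2_def)
  have "(\<integral>\<^sup>+s\<in>S. ennreal (\<bar>g s\<bar> * \<bar>h s\<bar>) \<partial>lborel)
      \<le> (\<integral>\<^sup>+s. ennreal c1 * (ennreal (\<bar>g s\<bar> powr p) * indicator S s)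
            + ennreal c2 * (ennreal (\<bar>h s\<bar> powr q) * indicator S s) \<partial>lborel)"
  proof (intro nn_integral_mono)
    fix s
    have "ennreal (\<bar>g s\<bar> * \<bar>h s\<bar>) \<le> ennreal (c1 * \<bar>g s\<bar> powr p + c2 * \<bar>h s\<bar> powr q)"
      unfolding c1_def c2_def by (intro ennreal_leI Young_inequality_scaled X Y pq) auto
    also have "\<dots> = ennreal c1 * ennreal (\<bar>g s\<bar> powr p) + ennreal c2 * ennreal (\<bar>h s\<bar> powr q)"
      using c by (simp add: ennreal_plus[symmetric] ennreal_mult[symmetric] del: ennreal_plus)
    finally show "ennreal (\<bar>g s\<bar> * \<bar>h s\<bar>) * indicator S s
        \<le> ennreal c1 * (ennreal (\<bar>g s\<bar> powr p) * indicator S s)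
          + ennreal c2 * (ennreal (\<bar>h s\<bar> powr q) * indicator S s)"
      by (auto simp: indicator_def)
  qed
  also have "\<dots> = ennreal c1 * (\<integral>\<^sup>+s\<in>S. ennreal (\<bar>g s\<bar> powr p) \<partial>lborel)
      + ennreal c2 * (\<integral>\<^sup>+s\<in>S. ennreal (\<bar>h s\<bar> powr q) \<partial>lborel)"
    by (simp add: nn_integral_add nn_integral_cmult)
  also have "\<dots> \<le> ennreal c1 * ennreal (X powr p) + ennreal c2 * ennreal (Y powr q)"
    using Lg Lh by (intro add_mono mult_left_mono) (auto simp: Lnorm_le_def)
  also have "\<dots> = ennreal (c1 * X powr p + c2 * Y powr q)"
    using c by (simp add: ennreal_plus[symmetric] ennreal_mult[symmetric] del: ennreal_plus)
  also have "c1 * X powr p + c2 * Y powr q = X * Y * (1/p + 1/q)"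
    using X Y pq by (simp add: c1_def c2_def powr_diff field_simps)
  finally show ?thesis using pq by simp
qed

lemma Holder_nn_integral:
  assumes p: "1 \<le> p" and [measurable]: "S \<in> sets borel"
    and [measurable]: "g \<in> borel_measurable borel" "h \<in> borel_measurable borel"
    and Lg: "Lnorm_le p S g X" and Dh: "dual_norm_le p S h Y"
  shows "(\<integral>\<^sup>+s\<in>S. ennreal (\<bar>g s\<bar> * \<bar>h s\<bar>) \<partial>lborel) \<le> ennreal (X * Y)"
proof (cases "p = 1")
  case True
  then show ?thesis
    using Holder_nn_integral_esssup Lg Dh by (simp add: dual_norm_le_def)
next
  case False
  then have pq: "1 < p" "1 < p / (p - 1)" "1/p + 1 / (p / (p - 1)) = 1"
    using p by (auto simp: field_simps)
  show ?thesis
    using Holder_nn_integral_conjugate[OF _ _ _ pq Lg] Dh False by (simp add: dual_norm_le_def)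
qed

lemma nn_integral_le_Holder:
  fixes g h F :: "real \<Rightarrow> real"
  assumes p: "1 \<le> p" and [measurable]: "S \<in> sets borel"
    and [measurable]: "g \<in> borel_measurable borel" "h \<in> borel_measurable borel"
    and Lg: "Lnorm_le p S g X" and Dh: "dual_norm_le p S h Y" and K: "0 \<le> K"
    and le: "AE s in lborel. s \<in> S \<longrightarrow> F s \<le> K * (\<bar>g s\<bar> * \<bar>h s\<bar>)"
  shows "(\<integral>\<^sup>+s\<in>S. ennreal (F s) \<partial>lborel) \<le> ennreal (K * (X * Y))"
proof -
  have "(\<integral>\<^sup>+s\<in>S. ennreal (F s) \<partial>lborel)
      \<le> (\<integral>\<^sup>+s. ennreal K * (ennreal (\<bar>g s\<bar> * \<bar>h s\<bar>) * indicator S s) \<partial>lborel)"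
    using le
  proof (intro nn_integral_mono_AE, eventually_elim)
    case (elim s)
    then show ?case
      using K by (auto simp: indicator_def ennreal_mult'[symmetric] intro!: ennreal_leI)
  qed
  also have "\<dots> = ennreal K * (\<integral>\<^sup>+s\<in>S. ennreal (\<bar>g s\<bar> * \<bar>h s\<bar>) \<partial>lborel)"
    by (rule nn_integral_cmult) simp
  also have "\<dots> \<le> ennreal K * ennreal (X * Y)"
    by (intro mult_left_mono Holder_nn_integral[OF p _ _ _ Lg Dh]) auto
  also have "\<dots> = ennreal (K * (X * Y))" using K by (simp add: ennreal_mult')
  finally show ?thesis .
qed

lemma nn_integral_split_Holder:
  fixes F g1 h1 g2 h2 :: "real \<Rightarrow> real"
  assumes p: "1 \<le> p" and d: "0 < d" "d \<le> b"
    and [measurable]: "F \<in> borel_measurable borel" and F: "\<And>s. 0 \<le> F s"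
    and [measurable]: "g1 \<in> borel_measurable borel" "h1 \<in> borel_measurable borel"
      "g2 \<in> borel_measurable borel" "h2 \<in> borel_measurable borel"
    and L1: "Lnorm_le p {0..d} g1 X1" and D1: "dual_norm_le p {0..d} h1 Y1"
    and L2: "Lnorm_le p {d..b} g2 X2" and D2: "dual_norm_le p {d..b} h2 Y2"
    and K: "0 \<le> K1" "0 \<le> K2" and Y: "0 \<le> Y1" "0 \<le> Y2"
    and le1: "\<And>s. 0 < s \<Longrightarrow> s \<le> d \<Longrightarrow> F s \<le> K1 * (\<bar>g1 s\<bar> * \<bar>h1 s\<bar>)"
    and le2: "\<And>s. d \<le> s \<Longrightarrow> s \<le> b \<Longrightarrow> F s \<le> K2 * (\<bar>g2 s\<bar> * \<bar>h2 s\<bar>)"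
  shows "(\<integral>\<^sup>+s\<in>{0..b}. ennreal (F s) \<partial>lborel) \<le> ennreal (K1 * (X1 * Y1) + K2 * (X2 * Y2))"
proof -
  have X: "0 \<le> X1" "0 \<le> X2" using L1 L2 by (auto simp: Lnorm_le_def)
  have "(\<integral>\<^sup>+s\<in>{0..b}. ennreal (F s) \<partial>lborel)
      \<le> (\<integral>\<^sup>+s. ennreal (F s) * indicator {0..d} s + ennreal (F s) * indicator {d..b} s \<partial>lborel)"
    by (intro nn_integral_mono) (auto simp: indicator_def)
  also have "\<dots> = (\<integral>\<^sup>+s\<in>{0..d}. ennreal (F s) \<partial>lborel) + (\<integral>\<^sup>+s\<in>{d..b}. ennreal (F s) \<partial>lborel)"
    by (rule nn_integral_add) auto
  also have "\<dots> \<le> ennreal (K1 * (X1 * Y1)) + ennreal (K2 * (X2 * Y2))"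
  proof (intro add_mono)
    have "AE s in lborel. s \<in> {0..d} \<longrightarrow> F s \<le> K1 * (\<bar>g1 s\<bar> * \<bar>h1 s\<bar>)"
      using AE_lborel_singleton[of 0] by eventually_elim (auto intro: le1)
    then show "(\<integral>\<^sup>+s\<in>{0..d}. ennreal (F s) \<partial>lborel) \<le> ennreal (K1 * (X1 * Y1))"
      by (intro nn_integral_le_Holder[OF p _ _ _ L1 D1 K(1)]) auto
    show "(\<integral>\<^sup>+s\<in>{d..b}. ennreal (F s) \<partial>lborel) \<le> ennreal (K2 * (X2 * Y2))"
      by (rule nn_integral_le_Holder[OF p _ _ _ L2 D2 K(2)]) (auto intro!: AE_I2 le2)
  qed
  also have "\<dots> = ennreal (K1 * (X1 * Y1) + K2 * (X2 * Y2))"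
    using K X Y by (simp add: ennreal_plus[symmetric] del: ennreal_plus)
  finally show ?thesis .
qed

lemma Lnorm_le_cong:
  assumes "\<And>s. s \<in> S \<Longrightarrow> g s = g' s"
  shows "Lnorm_le p S g X = Lnorm_le p S g' X"
proof -
  have "(\<integral>\<^sup>+t\<in>S. ennreal (\<bar>g t\<bar> powr p) \<partial>lborel) = (\<integral>\<^sup>+t\<in>S. ennreal (\<bar>g' t\<bar> powr p) \<partial>lborel)"
    by (intro nn_integral_cong) (auto simp: indicator_def assms)
  then show ?thesis by (simp add: Lnorm_le_def)
qed

lemma dual_norm_le_cong:
  assumes "\<And>s. s \<in> S \<Longrightarrow> g s = g' s"
  shows "dual_norm_le p S g X = dual_norm_le p S g' X"
proof -
  have "esssup_le S g X = esssup_le S g' X" unfolding esssup_le_def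
    by (intro AE_cong) (auto simp: assms)
  then show ?thesis using Lnorm_le_cong[OF assms] by (simp add: dual_norm_le_def)
qed

lemma dual_norm_le_mono:
  assumes p: "1 \<le> p" and [measurable]: "S \<in> sets borel" "h \<in> borel_measurable borel"
    and c: "0 \<le> c" and le: "\<And>s. s \<in> S \<Longrightarrow> \<bar>h' s\<bar> \<le> c * \<bar>h s\<bar>"
    and D: "dual_norm_le p S h Y"
  shows "dual_norm_le p S h' (c * Y)"
proof (cases "p = 1")
  case True
  then have "AE s in lborel. s \<in> S \<longrightarrow> \<bar>h s\<bar> \<le> Y" using D by (simp add: dual_norm_le_def esssup_le_def)
  then have "AE s in lborel. s \<in> S \<longrightarrow> \<bar>h' s\<bar> \<le> c * Y"
    by eventually_elim (metis c le mult_left_mono order_trans)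
  then show ?thesis using True by (simp add: dual_norm_le_def esssup_le_def)
next
  case False
  define q where "q = p / (p - 1)"
  have q: "1 < q" using p False by (simp add: q_def field_simps)
  have Y: "0 \<le> Y" and hY: "(\<integral>\<^sup>+s\<in>S. ennreal (\<bar>h s\<bar> powr q) \<partial>lborel) \<le> ennreal (Y powr q)"
    using D False by (auto simp: dual_norm_le_def Lnorm_le_def q_def)
  have "(\<integral>\<^sup>+s\<in>S. ennreal (\<bar>h' s\<bar> powr q) \<partial>lborel)
     \<le> (\<integral>\<^sup>+s. ennreal (c powr q) * (ennreal (\<bar>h s\<bar> powr q) * indicator S s) \<partial>lborel)"
  proof (intro nn_integral_mono)
    fix s
    have "\<bar>h' s\<bar> powr q \<le> c powr q * \<bar>h s\<bar> powr q" if "s \<in> S"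
      using le[OF that] q c by (auto simp flip: powr_mult intro: powr_mono2)
    then show "ennreal (\<bar>h' s\<bar> powr q) * indicator S s
        \<le> ennreal (c powr q) * (ennreal (\<bar>h s\<bar> powr q) * indicator S s)"
      by (auto simp: indicator_def ennreal_mult[symmetric] ennreal_leI)
  qed
  also have "\<dots> = ennreal (c powr q) * (\<integral>\<^sup>+s\<in>S. ennreal (\<bar>h s\<bar> powr q) \<partial>lborel)"
    by (rule nn_integral_cmult) simp
  also have "\<dots> \<le> ennreal (c powr q) * ennreal (Y powr q)" by (intro mult_left_mono hY) simp
  also have "\<dots> = ennreal ((c * Y) powr q)" using c Y by (simp add: powr_mult ennreal_mult)
  finally show ?thesis using False c Y by (simp add: dual_norm_le_def q_def Lnorm_le_def)
qed

definition powr_norm_const :: "real \<Rightarrow> real \<Rightarrow> real" where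
  "powr_norm_const p e = (if p = 1 then 1 else (1 / (- (e * (p / (p - 1)) + 1))) powr ((p - 1) / p))"

lemma powr_norm_const_nonneg: "0 \<le> powr_norm_const p e"
  by (simp add: powr_norm_const_def)

lemma nn_integral_powr_le:
  fixes m d b :: real
  assumes m: "m + 1 < 0" and d: "0 < d" "d \<le> b"
  shows "(\<integral>\<^sup>+s\<in>{d..b}. ennreal (s powr m) \<partial>lborel) \<le> ennreal (- (d powr (m + 1) / (m + 1)))"
proof -
  have "((\<lambda>s. s powr (m + 1) / (m + 1)) has_real_derivative s powr m) (at s within {d..b})"
    if "s \<in> {d..b}" for s
    using that d m by (auto intro!: derivative_eq_intros)
  then have "((\<lambda>s. s powr m) has_integral (b powr (m + 1) / (m + 1) - d powr (m + 1) / (m + 1))) {d..b}"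
    using d by (intro fundamental_theorem_of_calculus)
      (auto simp: has_real_derivative_iff_has_vector_derivative[symmetric])
  then have "(\<integral>\<^sup>+s\<in>{d..b}. ennreal (s powr m) \<partial>lborel) = ennreal (b powr (m + 1) / (m + 1) - d powr (m + 1) / (m + 1))"
    by (rule nn_integral_has_integral_lebesgue'[rotated]) simp
  also have "\<dots> \<le> ennreal (- (d powr (m + 1) / (m + 1)))"
    using m by (intro ennreal_leI) (simp add: divide_nonneg_neg)
  finally show ?thesis .
qed

lemma dual_norm_le_powr:
  assumes p: "1 \<le> p" and d: "0 < d" "d \<le> b" and e: "e + 1 - 1/p < 0"
  shows "dual_norm_le p {d..b} (\<lambda>s. s powr e) (powr_norm_const p e * d powr (e + 1 - 1/p))"
proof (cases "p = 1")
  case True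
  have "\<bar>s powr e\<bar> \<le> d powr e" if "s \<in> {d..b}" for s
    using that d e True by (auto intro!: powr_mono2')
  then show ?thesis using True by (auto simp: dual_norm_le_def esssup_le_def powr_norm_const_def)
next
  case False
  define q where "q = p / (p - 1)"
  have q: "1 < q" and iq: "1/q = 1 - 1/p" using p False by (auto simp: q_def field_simps)
  define m where "m = e * q"
  have "e * q < - (1/q) * q" using e iq q by (intro mult_strict_right_mono) auto
  then have m: "m + 1 < 0" using q by (simp add: m_def)
  have "(\<integral>\<^sup>+s\<in>{d..b}. ennreal (\<bar>s powr e\<bar> powr q) \<partial>lborel) = (\<integral>\<^sup>+s\<in>{d..b}. ennreal (s powr m) \<partial>lborel)"
    by (intro nn_integral_cong) (auto simp: indicator_def powr_powr m_def)
  also have "\<dots> \<le> ennreal (- (d powr (m + 1) / (m + 1)))"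
    by (rule nn_integral_powr_le[OF m d])
  also have "- (d powr (m + 1) / (m + 1)) = (powr_norm_const p e * d powr (e + 1 - 1/p)) powr q"
  proof -
    have k: "powr_norm_const p e = (1 / (- (m + 1))) powr (1/q)"
      using False q by (simp add: powr_norm_const_def m_def q_def)
    have "q - q/p = 1" using iq q by (simp add: field_simps)
    then have ex: "(e + 1 - 1/p) * q = m + 1" by (simp add: m_def algebra_simps)
    have "(powr_norm_const p e * d powr (e + 1 - 1/p)) powr q = 1 / (- (m + 1)) * d powr (m + 1)"
      using m d q by (simp add: k powr_mult powr_powr ex)
    then show ?thesis by (subst minus_divide_right) simp
  qed
  finally show ?thesis
    using False q d by (simp add: dual_norm_le_def Lnorm_le_def q_def powr_norm_const_nonneg)
qed

lemma nn_integral_lborel_affine: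
  fixes G :: "real \<Rightarrow> ennreal"
  assumes [measurable]: "G \<in> borel_measurable borel" "S \<in> sets borel" and \<sigma>: "\<bar>\<sigma>\<bar> = 1"
  shows "(\<integral>\<^sup>+t\<in>S. G t \<partial>lborel) = (\<integral>\<^sup>+s\<in>(\<lambda>s. c + \<sigma> * s) -` S. G (c + \<sigma> * s) \<partial>lborel)"
  using nn_integral_real_affine[of "\<lambda>t. G t * indicator S t" \<sigma> c] \<sigma>
  by (auto simp: indicator_def)

lemma Lnorm_le_affine:
  assumes [measurable]: "g \<in> borel_measurable borel" "S \<in> sets borel" and \<sigma>: "\<bar>\<sigma>\<bar> = 1"
    and L: "Lnorm_le p S g X"
  shows "Lnorm_le p ((\<lambda>s. c + \<sigma> * s) -` S) (\<lambda>s. g (c + \<sigma> * s)) X"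
  using L nn_integral_lborel_affine[of "\<lambda>t. ennreal (\<bar>g t\<bar> powr p)" S \<sigma> c] \<sigma>
  by (simp add: Lnorm_le_def)

lemma Lnorm_le_affine_cong:
  fixes c \<sigma> :: real
  assumes \<sigma>: "\<sigma> = 1 \<or> \<sigma> = -1" and [measurable]: "S \<in> sets borel" "g' \<in> borel_measurable borel"
    and T: "(\<lambda>s. c + \<sigma> * s) -` S = T" and g: "\<And>s. s \<in> T \<Longrightarrow> g (c + \<sigma> * s) = g' s"
    and L: "Lnorm_le p S g X"
  shows "Lnorm_le p T g' X"
proof -
  define g0 where "g0 t = g' (\<sigma> * (t - c))" for t
  have \<sigma>\<sigma>: "\<sigma> * \<sigma> = 1" using \<sigma> by auto
  have [measurable]: "g0 \<in> borel_measurable borel" unfolding g0_def[abs_def] by measurable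
  have "g t = g0 t" if "t \<in> S" for t
  proof -
    have "c + \<sigma> * (\<sigma> * (t - c)) = t" using \<sigma>\<sigma> by (simp add: mult.assoc[symmetric])
    then show ?thesis using g[of "\<sigma> * (t - c)"] T that by (auto simp: g0_def)
  qed
  then have "Lnorm_le p S g0 X" using L Lnorm_le_cong[of S g g0] by simp
  then have "Lnorm_le p ((\<lambda>s. c + \<sigma> * s) -` S) (\<lambda>s. g0 (c + \<sigma> * s)) X"
    using \<sigma> by (intro Lnorm_le_affine) auto
  moreover have "(\<lambda>s. g0 (c + \<sigma> * s)) = g'" using \<sigma>\<sigma> by (auto simp: g0_def mult.assoc[symmetric])
  ultimately show ?thesis using T by simp
qed

section \<open>The Dirichlet kernel and the integral representation of partial sums\<close>

definition dirichlet_kernel :: "nat \<Rightarrow> real \<Rightarrow> real" where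
  "dirichlet_kernel k t = 1/2 + (\<Sum>\<nu>=1..k. cos (real \<nu> * t))"

lemma dirichlet_kernel_mult_sin: "2 * sin (t/2) * dirichlet_kernel k t = sin ((real k + 1/2) * t)"
proof (induction k)
  case 0 then show ?case by (simp add: dirichlet_kernel_def)
next
  case (Suc k)
  have "dirichlet_kernel (Suc k) t = dirichlet_kernel k t + cos (real (Suc k) * t)" by (simp add: dirichlet_kernel_def)
  moreover have "2 * sin (t/2) * cos (real (Suc k) * t) = sin ((real (Suc k) + 1/2) * t) - sin ((real k + 1/2) * t)"
  proof -
    have e1: "(real (Suc k) + 1/2) * t = t/2 + real (Suc k) * t" by (simp add: algebra_simps)
    have e2: "(real k + 1/2) * t = real (Suc k) * t - t/2" by (simp add: algebra_simps)
    show ?thesis unfolding e1 e2 sin_add sin_diff by (simp add: algebra_simps)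
  qed
  ultimately show ?case using Suc by (simp add: algebra_simps)
qed

lemma dirichlet_kernel_mult_sin_sin: "4 * sin (t/2) * sin (real r * t / 2) * dirichlet_kernel k t
   = cos ((real k + 1/2 - real r/2) * t) - cos ((real (k + r) + 1/2 - real r/2) * t)"
proof -
  have "4 * sin (t/2) * sin (real r * t / 2) * dirichlet_kernel k t = 2 * sin (real r * t / 2) * sin ((real k + 1/2) * t)"
    using dirichlet_kernel_mult_sin[of t k] by (simp add: algebra_simps)
  also have "\<dots> = cos ((real k + 1/2) * t - real r * t / 2) - cos ((real k + 1/2) * t + real r * t / 2)"
    unfolding cos_add cos_diff by (simp add: algebra_simps)
  finally show ?thesis by (simp add: algebra_simps)
qed

lemma abs_dirichlet_kernel_le:
  assumes "0 < t" "t < 2*pi"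
  shows "\<bar>dirichlet_kernel k t\<bar> \<le> 1 / (2 * sin (t/2))"
proof -
  have s: "0 < sin (t/2)" using assms by (intro sin_gt_zero) auto
  have "\<bar>2 * sin (t/2) * dirichlet_kernel k t\<bar> \<le> 1" unfolding dirichlet_kernel_mult_sin by simp
  then have "2 * sin (t/2) * \<bar>dirichlet_kernel k t\<bar> \<le> 1" using s by (simp add: abs_mult)
  then show ?thesis using s by (simp add: field_simps)
qed

lemma continuous_on_dirichlet_kernel: "continuous_on A (dirichlet_kernel k)"
  unfolding dirichlet_kernel_def[abs_def] by (intro continuous_intros)

lemma borel_measurable_dirichlet_kernel[measurable]: "dirichlet_kernel k \<in> borel_measurable borel"
  by (rule borel_measurable_continuous_onI[OF continuous_on_dirichlet_kernel])

lemma abs_dirichlet_kernel_le_Suc: "\<bar>dirichlet_kernel k t\<bar> \<le> real k + 1"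
proof -
  have "\<bar>\<Sum>\<nu>=1..k. cos (real \<nu> * t)\<bar> \<le> (\<Sum>\<nu>=1..k. 1)"
    by (rule order_trans[OF sum_abs]) (intro sum_mono, simp)
  then show ?thesis unfolding dirichlet_kernel_def by simp
qed

lemma dirichlet_kernel_minus: "dirichlet_kernel k (- t) = dirichlet_kernel k t"
  unfolding dirichlet_kernel_def by simp

lemma dirichlet_kernel_periodic: "dirichlet_kernel k (t + 2*pi) = dirichlet_kernel k t"
proof -
  have "cos (real \<nu> * (t + 2*pi)) = cos (real \<nu> * t)" for \<nu>
  proof -
    have "real \<nu> * (t + 2*pi) = real \<nu> * t + 2 * real \<nu> * pi" by (simp add: algebra_simps)
    then show ?thesis by (simp add: cos_add)
  qed
  then show ?thesis unfolding dirichlet_kernel_def by simp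
qed

lemma set_integral_cos_Suc: "(LBINT t:{0..pi}. cos (real (Suc k) * t)) = 0"
proof -
  define c where "c = real (Suc k)"
  have c: "c > 0" by (simp add: c_def)
  have si: "set_integrable lborel {0..pi} (\<lambda>t. cos (c * t))"
    by (rule borel_integrable_atLeastAtMost') (intro continuous_intros)
  have "((\<lambda>t. cos (c * t)) has_integral (sin (c * pi) / c - sin (c * 0) / c)) {0..pi}"
  proof (rule fundamental_theorem_of_calculus)
    show "0 \<le> pi" by simp
    fix t assume "t \<in> {0..pi}"
    have "((\<lambda>t. sin (c * t) / c) has_real_derivative cos (c * t)) (at t)"
      using c by (auto intro!: derivative_eq_intros)
    then show "((\<lambda>t. sin (c * t) / c) has_vector_derivative cos (c * t)) (at t within {0..pi})"
      by (simp add: has_real_derivative_iff_has_vector_derivative[symmetric] has_field_derivative_at_within)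
  qed
  moreover have "sin (c * pi) = 0" using sin_npi[of "Suc k"] by (simp add: c_def)
  ultimately have "integral {0..pi} (\<lambda>t. cos (c * t)) = 0"
    by (simp add: integral_unique)
  then show ?thesis using set_borel_integral_eq_integral(2)[OF si] by (simp add: c_def)
qed

lemma set_integral_dirichlet_kernel: "set_integrable lborel {0..pi} (dirichlet_kernel k) \<and> (LBINT t:{0..pi}. dirichlet_kernel k t) = pi / 2"
proof (induction k)
  case 0
  have "set_integrable lborel {0..pi} (\<lambda>t. 1/2::real)"
    by (rule borel_integrable_atLeastAtMost') (intro continuous_intros)
  moreover have "(LBINT t:{0..pi}. (1/2::real)) = pi / 2"
    by (subst set_integral_const) (auto simp: measure_lborel_Icc)
  ultimately show ?case by (simp add: dirichlet_kernel_def)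
next
  case (Suc k)
  have e: "dirichlet_kernel (Suc k) = (\<lambda>t. dirichlet_kernel k t + cos (real (Suc k) * t))"
    by (auto simp: dirichlet_kernel_def)
  have ci: "set_integrable lborel {0..pi} (\<lambda>t. cos (real (Suc k) * t))"
    by (rule borel_integrable_atLeastAtMost') (intro continuous_intros)
  show ?case unfolding e using Suc ci set_integral_cos_Suc[of k] by (simp add: set_integral_add)
qed

lemma set_integral_translate:
  fixes F :: "real \<Rightarrow> real"
  shows "set_integrable lborel {a..b} F \<longleftrightarrow> set_integrable lborel {a-c..b-c} (\<lambda>t. F (c + t))"
    and "(LBINT u:{a..b}. F u) = (LBINT t:{a-c..b-c}. F (c + t))"
proof -
  have i: "indicator {a..b} (c + 1 * t) = (indicator {a-c..b-c} t :: real)" for t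
    by (auto simp: indicator_def)
  have "integrable lborel (\<lambda>u. indicator {a..b} u *\<^sub>R F u) \<longleftrightarrow>
        integrable lborel (\<lambda>t. indicator {a..b} (c + 1 * t) *\<^sub>R F (c + 1 * t))"
    by (rule lborel_integrable_real_affine_iff[symmetric]) simp
  then show "set_integrable lborel {a..b} F \<longleftrightarrow> set_integrable lborel {a-c..b-c} (\<lambda>t. F (c + t))"
    unfolding set_integrable_def by (simp only: i) simp
  have "(\<integral>u. indicator {a..b} u *\<^sub>R F u \<partial>lborel) = \<bar>1\<bar> *\<^sub>R (\<integral>t. indicator {a..b} (c + 1 * t) *\<^sub>R F (c + 1 * t) \<partial>lborel)"
    by (rule lborel_integral_real_affine) simp
  then show "(LBINT u:{a..b}. F u) = (LBINT t:{a-c..b-c}. F (c + t))"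
    unfolding set_lebesgue_integral_def by (simp only: i) simp
qed

lemma set_integral_reflect:
  fixes F :: "real \<Rightarrow> real"
  shows "set_integrable lborel {a..b} F \<longleftrightarrow> set_integrable lborel {-b..-a} (\<lambda>t. F (- t))"
    and "(LBINT u:{a..b}. F u) = (LBINT t:{-b..-a}. F (- t))"
proof -
  have i: "indicator {a..b} (0 + (-1) * t) = (indicator {-b..-a} t :: real)" for t
    by (auto simp: indicator_def)
  have "integrable lborel (\<lambda>u. indicator {a..b} u *\<^sub>R F u) \<longleftrightarrow>
        integrable lborel (\<lambda>t. indicator {a..b} (0 + (-1) * t) *\<^sub>R F (0 + (-1) * t))"
    by (rule lborel_integrable_real_affine_iff[symmetric]) simp
  then show "set_integrable lborel {a..b} F \<longleftrightarrow> set_integrable lborel {-b..-a} (\<lambda>t. F (- t))"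
    unfolding set_integrable_def by (simp only: i) simp
  have "(\<integral>u. indicator {a..b} u *\<^sub>R F u \<partial>lborel) = \<bar>-1\<bar> *\<^sub>R (\<integral>t. indicator {a..b} (0 + (-1) * t) *\<^sub>R F (0 + (-1) * t) \<partial>lborel)"
    by (rule lborel_integral_real_affine) simp
  then show "(LBINT u:{a..b}. F u) = (LBINT t:{-b..-a}. F (- t))"
    unfolding set_lebesgue_integral_def by (simp only: i) simp
qed

lemma periodic_add_of_int:
  fixes F :: "real \<Rightarrow> real"
  assumes per: "\<And>u. F (u + 2*pi) = F u"
  shows "F (u + 2*pi*real_of_int j) = F u"
proof -
  have pos: "F (u + 2*pi*real n) = F u" for u n
  proof (induction n arbitrary: u)
    case (Suc n)
    have "F (u + 2*pi*real (Suc n)) = F ((u + 2*pi*real n) + 2*pi)" by (simp add: algebra_simps)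
    then show ?case using per Suc by simp
  qed simp
  show ?thesis
  proof (cases "j \<ge> 0")
    case True
    then show ?thesis using pos[of u "nat j"] by simp
  next
    case False
    have "F ((u + 2*pi*real_of_int j) + 2*pi*real (nat (-j))) = F (u + 2*pi*real_of_int j)" by (rule pos)
    moreover have "(u + 2*pi*real_of_int j) + 2*pi*real (nat (-j)) = u" using False by simp
    ultimately show ?thesis by simp
  qed
qed

lemma periodic_set_integral_translate:
  fixes F :: "real \<Rightarrow> real"
  assumes per: "\<And>u. F (u + 2*pi) = F u" and int: "set_integrable lborel {a..b} F"
  shows "set_integrable lborel {a + 2*pi*real_of_int j .. b + 2*pi*real_of_int j} F"
    and "(LBINT u:{a + 2*pi*real_of_int j .. b + 2*pi*real_of_int j}. F u) = (LBINT u:{a..b}. F u)"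
proof -
  have sh: "(\<lambda>t. F (2*pi*real_of_int j + t)) = F"
    using periodic_add_of_int[of F, OF per] by (auto simp: add.commute)
  note T = set_integral_translate[of "a + 2*pi*real_of_int j" "b + 2*pi*real_of_int j" F "2*pi*real_of_int j",
      unfolded sh]
  show "set_integrable lborel {a + 2*pi*real_of_int j .. b + 2*pi*real_of_int j} F"
    using T(1) int by simp
  show "(LBINT u:{a + 2*pi*real_of_int j .. b + 2*pi*real_of_int j}. F u) = (LBINT u:{a..b}. F u)"
    using T(2) by simp
qed

lemma periodic_set_integral_period_0_2pi:
  fixes F :: "real \<Rightarrow> real"
  assumes per: "\<And>u. F (u + 2*pi) = F u" and int: "set_integrable lborel {-pi..pi} F"
    and y: "0 \<le> y" "y \<le> 2*pi"
  shows "set_integrable lborel {y-pi..y+pi} F \<and> (LBINT u:{y-pi..y+pi}. F u) = (LBINT u:{-pi..pi}. F u)"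
proof -
  have i1: "set_integrable lborel {y-pi..pi} F"
    by (rule set_integrable_subset[OF int]) (use y in auto)
  have i0: "set_integrable lborel {-pi..y-pi} F"
    by (rule set_integrable_subset[OF int]) (use y in auto)
  have i2: "set_integrable lborel {pi..y+pi} F" and e2: "(LBINT u:{pi..y+pi}. F u) = (LBINT u:{-pi..y-pi}. F u)"
    using periodic_set_integral_translate[where F=F, OF per i0, of 1] by (simp_all add: algebra_simps)
  have U1: "{y-pi..y+pi} = {y-pi..pi} \<union> {pi..y+pi}" using y by auto
  have U2: "{-pi..pi} = {-pi..y-pi} \<union> {y-pi..pi}" using y by auto
  have "set_integrable lborel {y-pi..y+pi} F" unfolding U1 by (rule set_integrable_Un[OF i1 i2]) auto
  moreover have "(LBINT u:{y-pi..y+pi}. F u) = (LBINT u:{y-pi..pi}. F u) + (LBINT u:{pi..y+pi}. F u)"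
    unfolding U1 by (rule set_integral_Un_AE[OF _ _ _ i1 i2])
      (auto intro: eventually_mono[OF AE_lborel_singleton[of pi]])
  moreover have "(LBINT u:{-pi..pi}. F u) = (LBINT u:{-pi..y-pi}. F u) + (LBINT u:{y-pi..pi}. F u)"
    unfolding U2 by (rule set_integral_Un_AE[OF _ _ _ i0 i1])
      (auto intro: eventually_mono[OF AE_lborel_singleton[of "y-pi"]])
  ultimately show ?thesis using e2 by simp
qed

lemma periodic_set_integral_period:
  fixes F :: "real \<Rightarrow> real"
  assumes per: "\<And>u. F (u + 2*pi) = F u" and int: "set_integrable lborel {-pi..pi} F"
  shows "set_integrable lborel {x-pi..x+pi} F \<and> (LBINT u:{x-pi..x+pi}. F u) = (LBINT u:{-pi..pi}. F u)"
proof -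
  define j where "j = \<lfloor>x / (2*pi)\<rfloor>"
  define y where "y = x - 2*pi*real_of_int j"
  have "real_of_int j \<le> x / (2*pi)" "x / (2*pi) < real_of_int j + 1" unfolding j_def by linarith+
  then have "2*pi*real_of_int j \<le> x" "x < 2*pi*(real_of_int j + 1)"
    by (simp_all add: field_simps)
  then have y: "0 \<le> y" "y \<le> 2*pi" unfolding y_def by (simp_all add: algebra_simps)
  note S = periodic_set_integral_period_0_2pi[OF per int y]
  have xy: "y - pi + 2*pi*real_of_int j = x - pi" "y + pi + 2*pi*real_of_int j = x + pi"
    by (simp_all add: y_def)
  show ?thesis
    using periodic_set_integral_translate[where F=F, OF per, of "y-pi" "y+pi" j] S unfolding xy by simp
qed

lemma set_integrable_mult_bounded:
  fixes f g :: "real \<Rightarrow> real"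
  assumes fi: "set_integrable lborel S f" and g[measurable]: "g \<in> borel_measurable borel"
    and B: "\<And>u. u \<in> S \<Longrightarrow> \<bar>g u\<bar> \<le> B"
  shows "set_integrable lborel S (\<lambda>u. f u * g u)"
proof (rule set_integrable_bound[where f="\<lambda>u. B * f u"])
  show "set_integrable lborel S (\<lambda>u. B * f u)" using fi by (rule set_integrable_mult_right)
  have m: "(\<lambda>x. indicator S x *\<^sub>R f x) \<in> borel_measurable lborel"
    using fi unfolding set_integrable_def by (rule borel_measurable_integrable)
  have "(\<lambda>x. (indicator S x *\<^sub>R f x) * g x) \<in> borel_measurable lborel"
    using m by measurable
  then show "set_borel_measurable lborel S (\<lambda>u. f u * g u)"
    unfolding set_borel_measurable_def by (simp add: mult.assoc)
  show "AE x in lborel. x \<in> S \<longrightarrow> norm (f x * g x) \<le> norm (B * f x)"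
  proof (intro AE_I2 impI)
    fix x assume x: "x \<in> S"
    have "\<bar>f x\<bar> * \<bar>g x\<bar> \<le> \<bar>f x\<bar> * B" using B[OF x] by (intro mult_left_mono) auto
    also have "\<dots> \<le> \<bar>B\<bar> * \<bar>f x\<bar>" by (simp add: mult.commute mult_right_mono)
    finally show "norm (f x * g x) \<le> norm (B * f x)" by (simp add: abs_mult)
  qed
qed

lemma in_Lp_set_integrable:
  assumes hf: "in_Lp p f" and p: "1 \<le> p"
  shows "set_integrable lborel {-pi..pi} f"
proof (rule set_integrable_bound[where f="\<lambda>t. 1 + \<bar>f t\<bar> powr p"])
  have fm[measurable]: "f \<in> borel_measurable borel" using hf by (simp add: in_Lp_def)
  have i1: "set_integrable lborel {-pi..pi} (\<lambda>t. 1::real)"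
    by (rule borel_integrable_atLeastAtMost') (intro continuous_intros)
  show "set_integrable lborel {-pi..pi} (\<lambda>t. 1 + \<bar>f t\<bar> powr p)"
    using i1 hf by (intro set_integral_add) (auto simp: in_Lp_def)
  show "set_borel_measurable lborel {-pi..pi} f"
    unfolding set_borel_measurable_def by measurable
  show "AE x in lborel. x \<in> {-pi..pi} \<longrightarrow> norm (f x) \<le> norm (1 + \<bar>f x\<bar> powr p)"
  proof (intro AE_I2 impI)
    fix x
    have "\<bar>f x\<bar> \<le> 1 + \<bar>f x\<bar> powr p"
    proof (cases "\<bar>f x\<bar> \<le> 1")
      case True
      have "0 \<le> \<bar>f x\<bar> powr p" by simp
      then show ?thesis using True by linarith
    next
      case False
      then have "\<bar>f x\<bar> powr 1 \<le> \<bar>f x\<bar> powr p" using p by (intro powr_mono) auto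
      then show ?thesis using False by simp
    qed
    then show "norm (f x) \<le> norm (1 + \<bar>f x\<bar> powr p)" by simp
  qed
qed

lemma fourier_term_eq_integral:
  fixes f :: "real \<Rightarrow> real"
  assumes [measurable]: "f \<in> borel_measurable borel" and fi: "set_integrable lborel {-pi..pi} f"
  shows "fourier_a f \<nu> * cos (\<nu> * x) + fourier_b f \<nu> * sin (\<nu> * x)
    = (LBINT u:{-pi..pi}. f u * cos (\<nu> * (u - x))) / pi"
proof -
  have "set_integrable lborel {-pi..pi} (\<lambda>u. f u * cos (\<nu> * u))"
    by (rule set_integrable_mult_bounded[OF fi, where B=1]) auto
  then have ic: "set_integrable lborel {-pi..pi} (\<lambda>u. f u * cos (\<nu> * u) * cos (\<nu> * x))"
    by (rule set_integrable_mult_left)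
  have "set_integrable lborel {-pi..pi} (\<lambda>u. f u * sin (\<nu> * u))"
    by (rule set_integrable_mult_bounded[OF fi, where B=1]) auto
  then have isn: "set_integrable lborel {-pi..pi} (\<lambda>u. f u * sin (\<nu> * u) * sin (\<nu> * x))"
    by (rule set_integrable_mult_left)
  have "fourier_a f \<nu> * cos (\<nu> * x) + fourier_b f \<nu> * sin (\<nu> * x)
    = ((LBINT u:{-pi..pi}. f u * cos (\<nu> * u) * cos (\<nu> * x))
      + (LBINT u:{-pi..pi}. f u * sin (\<nu> * u) * sin (\<nu> * x))) / pi"
    by (simp add: fourier_a_def fourier_b_def add_divide_distrib)
  also have "\<dots> = (LBINT u:{-pi..pi}. f u * cos (\<nu> * u) * cos (\<nu> * x) + f u * sin (\<nu> * u) * sin (\<nu> * x)) / pi"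
    by (simp add: set_integral_add(2)[OF ic isn])
  also have "\<dots> = (LBINT u:{-pi..pi}. f u * cos (\<nu> * (u - x))) / pi"
    by (simp add: right_diff_distrib cos_diff algebra_simps)
  finally show ?thesis .
qed

lemma fourier_partial_sum_eq_integral:
  fixes f :: "real \<Rightarrow> real"
  assumes [measurable]: "f \<in> borel_measurable borel" and fi: "set_integrable lborel {-pi..pi} f"
  shows "fourier_partial_sum f k x = (LBINT u:{-pi..pi}. f u * dirichlet_kernel k (u - x)) / pi"
proof (induction k)
  case 0
  show ?case by (simp add: fourier_partial_sum_def fourier_a_def dirichlet_kernel_def)
next
  case (Suc k)
  have iD: "set_integrable lborel {-pi..pi} (\<lambda>u. f u * dirichlet_kernel k (u - x))"
    by (rule set_integrable_mult_bounded[OF fi, where B="real k + 1"]) (auto simp: abs_dirichlet_kernel_le_Suc)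
  have icx: "set_integrable lborel {-pi..pi} (\<lambda>u. f u * cos (real (Suc k) * (u - x)))"
    by (rule set_integrable_mult_bounded[OF fi, where B=1]) auto
  have "fourier_partial_sum f (Suc k) x = fourier_partial_sum f k x
      + (fourier_a f (Suc k) * cos (real (Suc k) * x) + fourier_b f (Suc k) * sin (real (Suc k) * x))"
    by (simp add: fourier_partial_sum_def)
  also have "\<dots> = ((LBINT u:{-pi..pi}. f u * dirichlet_kernel k (u - x))
      + (LBINT u:{-pi..pi}. f u * cos (real (Suc k) * (u - x)))) / pi"
    using Suc fourier_term_eq_integral[OF _ fi, of "Suc k" x] by (simp add: add_divide_distrib)
  also have "(LBINT u:{-pi..pi}. f u * dirichlet_kernel k (u - x))
      + (LBINT u:{-pi..pi}. f u * cos (real (Suc k) * (u - x)))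
      = (LBINT u:{-pi..pi}. f u * dirichlet_kernel k (u - x) + f u * cos (real (Suc k) * (u - x)))"
    by (rule set_integral_add(2)[symmetric, OF iD icx])
  also have "\<dots> = (LBINT u:{-pi..pi}. f u * dirichlet_kernel (Suc k) (u - x))"
    by (simp add: dirichlet_kernel_def algebra_simps)
  finally show ?case .
qed

lemma periodic_set_integral_shift:
  fixes F :: "real \<Rightarrow> real"
  assumes per: "\<And>u. F (u + 2*pi) = F u" and fi: "set_integrable lborel {-pi..pi} F"
  shows "set_integrable lborel {-pi..pi} (\<lambda>t. F (x + t))"
    and "(LBINT u:{-pi..pi}. F u) = (LBINT t:{-pi..pi}. F (x + t))"
proof -
  note P = periodic_set_integral_period[where F=F, OF per fi, of x]
  have b: "x - pi - x = -pi" "x + pi - x = pi" by simp_all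
  show "set_integrable lborel {-pi..pi} (\<lambda>t. F (x + t))"
    using P set_integral_translate(1)[of "x-pi" "x+pi" F x] by (simp only: b)
  show "(LBINT u:{-pi..pi}. F u) = (LBINT t:{-pi..pi}. F (x + t))"
    using P set_integral_translate(2)[of "x-pi" "x+pi" F x] by (simp only: b)
qed

lemma set_integral_split_reflect:
  fixes G :: "real \<Rightarrow> real"
  assumes gi: "set_integrable lborel {-pi..pi} G"
  shows "set_integrable lborel {0..pi} G" "set_integrable lborel {0..pi} (\<lambda>t. G (- t))"
    and "(LBINT t:{-pi..pi}. G t) = (LBINT t:{0..pi}. G t + G (- t))"
proof -
  have i1: "set_integrable lborel {-pi..0} G" by (rule set_integrable_subset[OF gi]) auto
  show i2: "set_integrable lborel {0..pi} G" by (rule set_integrable_subset[OF gi]) auto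
  show i3: "set_integrable lborel {0..pi} (\<lambda>t. G (- t))"
    using i1 set_integral_reflect(1)[of "-pi" 0 G] by simp
  have U: "{-pi..pi} = {-pi..0} \<union> {0..pi}" by auto
  have "(LBINT t:{-pi..pi}. G t) = (LBINT t:{-pi..0}. G t) + (LBINT t:{0..pi}. G t)"
    unfolding U by (rule set_integral_Un_AE[OF _ _ _ i1 i2]) (auto intro: eventually_mono[OF AE_lborel_singleton[of 0]])
  also have "(LBINT t:{-pi..0}. G t) = (LBINT t:{0..pi}. G (- t))"
    using set_integral_reflect(2)[of "-pi" 0 G] by simp
  also have "(LBINT t:{0..pi}. G (- t)) + (LBINT t:{0..pi}. G t) = (LBINT t:{0..pi}. G t + G (- t))"
    using set_integral_add(2)[OF i2 i3] by simp
  finally show "(LBINT t:{-pi..pi}. G t) = (LBINT t:{0..pi}. G t + G (- t))" .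
qed

lemma set_integrable_phi:
  fixes f :: "real \<Rightarrow> real"
  assumes fm[measurable]: "f \<in> borel_measurable borel" and per: "\<And>u. f (u + 2*pi) = f u"
    and fi: "set_integrable lborel {-pi..pi} f"
  shows "set_integrable lborel {0..pi} (phi f x)"
proof -
  have a: "set_integrable lborel {-pi..pi} (\<lambda>t. f (x + t))" by (rule periodic_set_integral_shift(1)[OF per fi])
  note S = set_integral_split_reflect[OF a]
  have c: "set_integrable lborel {0..pi} (\<lambda>t. 2 * f x)"
    by (rule borel_integrable_atLeastAtMost') (intro continuous_intros)
  have "set_integrable lborel {0..pi} (\<lambda>t. (f (x + t) + f (x + - t)) - 2 * f x)"
    using S(1,2) c by (intro set_integral_diff set_integral_add)
  then show ?thesis by (simp add: phi_def[abs_def])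
qed

lemma fourier_partial_sum_minus_eq_integral:
  fixes f :: "real \<Rightarrow> real"
  assumes fm[measurable]: "f \<in> borel_measurable borel" and per: "\<And>u. f (u + 2*pi) = f u"
    and fi: "set_integrable lborel {-pi..pi} f"
  shows "set_integrable lborel {0..pi} (\<lambda>t. phi f x t * dirichlet_kernel k t)"
    and "fourier_partial_sum f k x - f x = (LBINT t:{0..pi}. phi f x t * dirichlet_kernel k t) / pi"
proof -
  show I: "set_integrable lborel {0..pi} (\<lambda>t. phi f x t * dirichlet_kernel k t)"
    by (rule set_integrable_mult_bounded[OF set_integrable_phi[OF fm per fi], where B="real k + 1"]) (auto simp: abs_dirichlet_kernel_le_Suc)
  define F where "F u = f u * dirichlet_kernel k (u - x)" for u
  have Fper: "F (u + 2*pi) = F u" for u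
  proof -
    have "dirichlet_kernel k (u + 2*pi - x) = dirichlet_kernel k (u - x)" using dirichlet_kernel_periodic[of k "u - x"] by (simp add: algebra_simps)
    then show ?thesis by (simp add: F_def per)
  qed
  have Fi: "set_integrable lborel {-pi..pi} F"
    unfolding F_def by (rule set_integrable_mult_bounded[OF fi, where B="real k + 1"]) (auto simp: abs_dirichlet_kernel_le_Suc)
  define G where "G t = f (x + t) * dirichlet_kernel k t" for t
  have FG: "(\<lambda>t. F (x + t)) = G" by (auto simp: F_def G_def)
  have Gi: "set_integrable lborel {-pi..pi} G" using periodic_set_integral_shift(1)[OF Fper Fi, of x] by (simp add: FG)
  have "fourier_partial_sum f k x = (LBINT u:{-pi..pi}. F u) / pi"
    using fourier_partial_sum_eq_integral[OF fm fi] by (simp add: F_def)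
  also have "(LBINT u:{-pi..pi}. F u) = (LBINT t:{-pi..pi}. G t)"
    using periodic_set_integral_shift(2)[OF Fper Fi, of x] by (simp add: FG)
  also have "\<dots> = (LBINT t:{0..pi}. G t + G (- t))" by (rule set_integral_split_reflect(3)[OF Gi])
  finally have ps: "fourier_partial_sum f k x = (LBINT t:{0..pi}. G t + G (- t)) / pi" .
  have Gi2: "set_integrable lborel {0..pi} (\<lambda>t. G t + G (- t))"
    using set_integral_split_reflect(1,2)[OF Gi] by (intro set_integral_add)
  have Di: "set_integrable lborel {0..pi} (\<lambda>t. 2 * f x * dirichlet_kernel k t)"
    using set_integral_dirichlet_kernel[of k] by (intro set_integrable_mult_right) auto
  have "(LBINT t:{0..pi}. phi f x t * dirichlet_kernel k t) = (LBINT t:{0..pi}. (G t + G (- t)) - 2 * f x * dirichlet_kernel k t)"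
    by (intro set_lebesgue_integral_cong) (auto simp: phi_def G_def dirichlet_kernel_minus algebra_simps)
  also have "\<dots> = (LBINT t:{0..pi}. G t + G (- t)) - (LBINT t:{0..pi}. 2 * f x * dirichlet_kernel k t)"
    by (rule set_integral_diff(2)[OF Gi2 Di])
  also have "(LBINT t:{0..pi}. 2 * f x * dirichlet_kernel k t) = 2 * f x * (pi / 2)"
    using set_integral_dirichlet_kernel[of k] by simp
  finally show "fourier_partial_sum f k x - f x = (LBINT t:{0..pi}. phi f x t * dirichlet_kernel k t) / pi"
    using ps by (simp add: field_simps)
qed

lemma borel_measurable_phi:
  assumes [measurable]: "f \<in> borel_measurable borel"
  shows "phi f x \<in> borel_measurable borel"
  unfolding phi_def[abs_def] by measurable

lemma abs_set_integral_le_nn_integral: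
  fixes g :: "real \<Rightarrow> real"
  assumes "set_integrable lborel S g"
  shows "ennreal \<bar>LBINT t:S. g t\<bar> \<le> (\<integral>\<^sup>+t\<in>S. ennreal \<bar>g t\<bar> \<partial>lborel)"
proof -
  have i: "integrable lborel (\<lambda>t. norm (indicator S t *\<^sub>R g t))"
    using assms by (simp add: set_integrable_def)
  have "ennreal \<bar>LBINT t:S. g t\<bar> \<le> ennreal (\<integral>t. norm (indicator S t *\<^sub>R g t) \<partial>lborel)"
    unfolding set_lebesgue_integral_def
    by (intro ennreal_leI) (metis integral_norm_bound real_norm_def)
  also have "\<dots> = (\<integral>\<^sup>+t. ennreal (norm (indicator S t *\<^sub>R g t)) \<partial>lborel)"
    by (rule nn_integral_eq_integral[OF i, symmetric]) simp
  also have "\<dots> = (\<integral>\<^sup>+t\<in>S. ennreal \<bar>g t\<bar> \<partial>lborel)"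
    by (intro nn_integral_cong) (auto simp: indicator_def)
  finally show ?thesis .
qed

lemma Jordan_inequality:
  assumes "0 \<le> x" "x \<le> pi/2"
  shows "2 * x / pi \<le> sin x"
proof -
  define g where "g y = sin y - 2 * y / pi" for y
  have gd: "DERIV g y :> cos y - 2 / pi" for y
    unfolding g_def by (auto intro!: derivative_eq_intros)
  have gc: "continuous_on A g" for A unfolding g_def by (intro continuous_intros) auto
  have "0 \<le> g x"
  proof (cases "cos x \<ge> 2 / pi")
    case True
    have "g 0 \<le> g x"
    proof (rule DERIV_nonneg_imp_increasing_open[OF assms(1) _ gc])
      fix y assume y: "0 < y" "y < x"
      have "cos x \<le> cos y" using y assms by (intro cos_monotone_0_pi_le) auto
      then show "\<exists>d. DERIV g y :> d \<and> d \<ge> 0" using gd True by force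
    qed
    then show ?thesis by (simp add: g_def)
  next
    case False
    have "g x \<ge> g (pi/2)"
    proof (rule DERIV_nonpos_imp_decreasing_open[OF assms(2) _ gc])
      fix y assume y: "x < y" "y < pi/2"
      have "cos y \<le> cos x" using y assms by (intro cos_monotone_0_pi_le) auto
      then show "\<exists>d. DERIV g y :> d \<and> d \<le> 0" using gd False by force
    qed
    then show ?thesis by (simp add: g_def)
  qed
  then show ?thesis by (simp add: g_def)
qed

lemma sin_half_ge:
  fixes y :: real
  assumes "0 \<le> y" "y \<le> pi"
  shows "y / pi \<le> sin (y / 2)"
  using Jordan_inequality[of "y / 2"] assms by simp

lemma sin_mult_half_ge:
  assumes r: "0 < r" and s: "0 \<le> s" "s \<le> pi / r"
  shows "r * s / pi \<le> sin (r * s / 2)"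
proof -
  have "r * s \<le> pi" using s r by (simp add: field_simps)
  then show ?thesis using Jordan_inequality[of "r * s / 2"] s r by simp
qed

lemma abs_sin_npi_pm: "\<bar>sin (real j * pi + y)\<bar> = \<bar>sin y\<bar>" "\<bar>sin (real j * pi - y)\<bar> = \<bar>sin y\<bar>"
  by (simp_all add: sin_add sin_diff abs_mult)

lemma abs_sin_mult_half_cell:
  assumes r: "1 \<le> r" and s: "0 \<le> s" "s \<le> pi / r"
  shows "\<bar>sin (r * (2 * real j * pi / r + s) / 2)\<bar> = sin (r * s / 2)"
    and "\<bar>sin (r * (2 * real j * pi / r - s) / 2)\<bar> = sin (r * s / 2)"
proof -
  have rs: "r * s \<le> pi" "0 \<le> r * s" using r s by (simp_all add: field_simps)
  have pos: "0 \<le> sin (r * s / 2)" using rs by (intro sin_ge_zero) auto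
  have e1: "r * (2 * real j * pi / r + s) / 2 = real j * pi + r * s / 2" using r by (simp add: field_simps)
  have e2: "r * (2 * real j * pi / r - s) / 2 = real j * pi - r * s / 2" using r by (simp add: field_simps)
  have "\<bar>sin (real j * pi + r * s / 2)\<bar> = \<bar>sin (r * s / 2)\<bar>" by (rule abs_sin_npi_pm(1))
  then show "\<bar>sin (r * (2 * real j * pi / r + s) / 2)\<bar> = sin (r * s / 2)"
    using pos by (simp only: e1)
  have "\<bar>sin (real j * pi - r * s / 2)\<bar> = \<bar>sin (r * s / 2)\<bar>" by (rule abs_sin_npi_pm(2))
  then show "\<bar>sin (r * (2 * real j * pi / r - s) / 2)\<bar> = sin (r * s / 2)"
    using pos by (simp only: e2)
qed

lemma modulus_type_mono: "modulus_type \<omega> \<Longrightarrow> 0 \<le> x \<Longrightarrow> x \<le> y \<Longrightarrow> y \<le> 2*pi \<Longrightarrow> \<omega> x \<le> \<omega> y"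
  unfolding modulus_type_def mono_on_def by auto

lemma modulus_type_nonneg: "modulus_type \<omega> \<Longrightarrow> 0 \<le> x \<Longrightarrow> x \<le> 2*pi \<Longrightarrow> 0 \<le> \<omega> x"
  using modulus_type_mono[of \<omega> 0 x] by (simp add: modulus_type_def)

lemma modulus_type_mult_nat_le:
  assumes w: "modulus_type \<omega>" and x: "0 \<le> x" and m: "real m * x \<le> 2*pi"
  shows "\<omega> (real m * x) \<le> real m * \<omega> x"
  using m
proof (induction m)
  case 0 then show ?case using w by (simp add: modulus_type_def)
next
  case (Suc m)
  have mx: "real m * x \<le> 2*pi" using Suc.prems x by (simp add: algebra_simps)
  show ?case
  proof (cases "m = 0")
    case True then show ?thesis by simp
  next
    case False
    then have "x \<le> real m * x" using x by (simp add: mult_le_cancel_right1)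
    then have "\<omega> (x + real m * x) \<le> \<omega> x + \<omega> (real m * x)"
      using w x Suc.prems unfolding modulus_type_def by (auto simp: algebra_simps)
    also have "\<dots> \<le> \<omega> x + real m * \<omega> x" using Suc.IH[OF mx] by simp
    finally show ?thesis by (simp add: algebra_simps)
  qed
qed

lemma modulus_type_ratio_le:
  assumes w: "modulus_type \<omega>" and ab: "0 < a" "a \<le> b" "b \<le> pi"
  shows "\<omega> b * a \<le> 2 * \<omega> a * b"
proof -
  define k where "k = nat \<lceil>b / a\<rceil>"
  have k1: "b / a \<le> real k" unfolding k_def by linarith
  have k2: "real k < b / a + 1" unfolding k_def using ab by (simp add: divide_nonneg_pos) linarith
  have ka1: "b \<le> real k * a" using k1 ab by (simp add: field_simps)
  have ka2: "real k * a < b + a" using k2 ab by (simp add: field_simps)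
  have "\<omega> b \<le> \<omega> (real k * a)" using ka1 ka2 ab by (intro modulus_type_mono[OF w]) auto
  also have "\<dots> \<le> real k * \<omega> a" using ka2 ab by (intro modulus_type_mult_nat_le[OF w]) auto
  finally have "\<omega> b * a \<le> real k * \<omega> a * a" using ab by (simp add: mult_right_mono)
  also have "\<dots> = (real k * a) * \<omega> a" by simp
  also have "\<dots> \<le> (b + a) * \<omega> a" using ka2 modulus_type_nonneg[OF w, of a] ab by (intro mult_right_mono) auto
  also have "\<dots> \<le> 2 * \<omega> a * b"
  proof -
    have "a * \<omega> a \<le> b * \<omega> a" using ab modulus_type_nonneg[OF w, of a] by (intro mult_right_mono) auto
    then show ?thesis by (simp add: algebra_simps)
  qed
  finally show ?thesis .
qed

lemma modulus_type_mult_le: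
  assumes w: "modulus_type \<omega>" and x: "0 \<le> x" and c: "1 \<le> c" and cx: "c * x \<le> pi"
  shows "\<omega> (c * x) \<le> 2 * c * \<omega> x"
proof -
  define m where "m = nat \<lceil>c\<rceil>"
  have m1: "c \<le> real m" unfolding m_def by linarith
  have m2: "real m \<le> 2 * c" unfolding m_def using c by linarith
  have "real m * x \<le> 2 * c * x" using m2 x by (intro mult_right_mono) auto
  also have "\<dots> \<le> 2 * pi" using cx by simp
  finally have mx: "real m * x \<le> 2 * pi" .
  have "\<omega> (c * x) \<le> \<omega> (real m * x)" using m1 x c cx mx by (intro modulus_type_mono[OF w]) (auto intro: mult_right_mono)
  also have "\<dots> \<le> real m * \<omega> x" by (rule modulus_type_mult_nat_le[OF w x mx])
  also have "\<dots> \<le> 2 * c * \<omega> x"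
  proof -
    have "x \<le> c * x" using c x by (simp add: mult_le_cancel_right1)
    then have x2: "x \<le> 2 * pi" using cx pi_gt_zero by linarith
    show ?thesis using m2 modulus_type_nonneg[OF w x x2] by (intro mult_right_mono) auto
  qed
  finally show ?thesis .
qed

text \<open>\<open>\<omega>\<close> need not be measurable outside \<open>[0, 2\<pi>]\<close>, so the measure-theoretic estimates are
  carried out with this continuous extension, which agrees with \<open>\<omega>\<close> where it matters.\<close>
definition modulus_extension :: "(real \<Rightarrow> real) \<Rightarrow> real \<Rightarrow> real" where
  "modulus_extension \<omega> t = \<omega> (max 0 (min (2*pi) t))"

lemma modulus_extension_eq: "0 \<le> t \<Longrightarrow> t \<le> 2*pi \<Longrightarrow> modulus_extension \<omega> t = \<omega> t"
  by (simp add: modulus_extension_def)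

lemma borel_measurable_modulus_extension:
  assumes "modulus_type \<omega>"
  shows "modulus_extension \<omega> \<in> borel_measurable borel"
proof (rule borel_measurable_continuous_onI)
  have "continuous_on {0..2*pi} \<omega>" using assms by (simp add: modulus_type_def)
  moreover have "continuous_on UNIV (\<lambda>t::real. max 0 (min (2*pi) t))" by (intro continuous_intros)
  moreover have "(\<lambda>t::real. max 0 (min (2*pi) t)) ` UNIV \<subseteq> {0..2*pi}" by auto
  ultimately show "continuous_on UNIV (modulus_extension \<omega>)"
    unfolding modulus_extension_def[abs_def] by (rule continuous_on_compose2)
qed

section \<open>The kernel of the matrix means\<close>

definition mean_kernel :: "(nat \<Rightarrow> real) \<Rightarrow> nat \<Rightarrow> real \<Rightarrow> real" where
  "mean_kernel a K t = (\<Sum>k\<le>K. a k * dirichlet_kernel k t)"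

definition abel_bound :: "(nat \<Rightarrow> real) \<Rightarrow> nat \<Rightarrow> nat \<Rightarrow> real" where
  "abel_bound a K r = (\<Sum>k\<le>K. \<bar>a k - a (k + r)\<bar>) + (\<Sum>k<r. a k) + (\<Sum>k=K+1..K+r. a k)"

lemma sum_mult_shift_diff_eq:
  fixes a c :: "nat \<Rightarrow> real"
  shows "(\<Sum>k\<le>K. a k * (c k - c (k + r))) =
    (\<Sum>k\<le>K. (a (k + r) - a k) * c (k + r)) + (\<Sum>k<r. a k * c k) - (\<Sum>k=K+1..K+r. a k * c k)"
proof -
  have 1: "(\<Sum>k\<le>K. a k * c k) + (\<Sum>k=K+1..K+r. a k * c k) = (\<Sum>k\<le>K+r. a k * c k)"
  proof -
    have "{..K+r} = {..K} \<union> {K+1..K+r}" by auto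
    then show ?thesis by (simp add: sum.union_disjoint)
  qed
  have 2: "(\<Sum>k\<le>K+r. a k * c k) = (\<Sum>k<r. a k * c k) + (\<Sum>k\<le>K. a (k + r) * c (k + r))"
  proof -
    have "{..K+r} = {..<r} \<union> {r..K+r}" by auto
    then have "(\<Sum>k\<le>K+r. a k * c k) = (\<Sum>k<r. a k * c k) + (\<Sum>k=r..K+r. a k * c k)"
      by (simp, subst sum.union_disjoint, auto)
    also have "(\<Sum>k=r..K+r. a k * c k) = (\<Sum>k=0..K. a (k + r) * c (k + r))"
      using sum.shift_bounds_cl_nat_ivl[of "\<lambda>k. a k * c k" 0 r K] by simp
    finally show ?thesis by (simp add: atLeast0AtMost)
  qed
  show ?thesis using 1 2 by (simp add: algebra_simps sum_subtractf sum.distrib sum_distrib_left)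
qed

lemma abs_sum_mult_shift_diff_le:
  fixes a c :: "nat \<Rightarrow> real"
  assumes nn: "\<And>k. 0 \<le> a k" and c: "\<And>k. \<bar>c k\<bar> \<le> 1"
  shows "\<bar>\<Sum>k\<le>K. a k * (c k - c (k + r))\<bar> \<le> abel_bound a K r"
proof -
  have b1: "\<bar>\<Sum>k\<le>K. (a (k + r) - a k) * c (k + r)\<bar> \<le> (\<Sum>k\<le>K. \<bar>a k - a (k + r)\<bar>)"
  proof -
    have "\<bar>\<Sum>k\<le>K. (a (k + r) - a k) * c (k + r)\<bar> \<le> (\<Sum>k\<le>K. \<bar>(a (k + r) - a k) * c (k + r)\<bar>)"
      by (rule sum_abs)
    also have "\<dots> \<le> (\<Sum>k\<le>K. \<bar>a k - a (k + r)\<bar>)"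
      by (intro sum_mono) (simp add: abs_mult abs_minus_commute mult_left_le[OF c])
    finally show ?thesis .
  qed
  have b2: "\<bar>\<Sum>k<r. a k * c k\<bar> \<le> (\<Sum>k<r. a k)"
    by (rule order_trans[OF sum_abs], intro sum_mono) (simp add: abs_mult nn mult_left_le[OF c])
  have b3: "\<bar>\<Sum>k=K+1..K+r. a k * c k\<bar> \<le> (\<Sum>k=K+1..K+r. a k)"
    by (rule order_trans[OF sum_abs], intro sum_mono) (simp add: abs_mult nn mult_left_le[OF c])
  show ?thesis unfolding sum_mult_shift_diff_eq abel_bound_def using b1 b2 b3 by linarith
qed

lemma abel_bound_nonneg: "(\<And>k. 0 \<le> a k) \<Longrightarrow> 0 \<le> abel_bound a K r"
  unfolding abel_bound_def by (intro add_nonneg_nonneg sum_nonneg) auto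

lemma borel_measurable_mean_kernel[measurable]: "mean_kernel a K \<in> borel_measurable borel"
  unfolding mean_kernel_def by measurable

lemma abs_mean_kernel_le:
  assumes nn: "\<And>k. 0 \<le> a k" and s1: "(\<Sum>k\<le>K. a k) \<le> 1" and t: "0 < t" "t < 2*pi"
  shows "\<bar>mean_kernel a K t\<bar> \<le> 1 / (2 * sin (t/2))"
proof -
  have s: "0 < sin (t/2)" using t by (intro sin_gt_zero) auto
  have "\<bar>mean_kernel a K t\<bar> \<le> (\<Sum>k\<le>K. \<bar>a k * dirichlet_kernel k t\<bar>)" unfolding mean_kernel_def by (rule sum_abs)
  also have "\<dots> \<le> (\<Sum>k\<le>K. a k * (1 / (2 * sin (t/2))))"
  proof (intro sum_mono)
    fix k
    show "\<bar>a k * dirichlet_kernel k t\<bar> \<le> a k * (1 / (2 * sin (t/2)))"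
      using mult_left_mono[OF abs_dirichlet_kernel_le[OF t, of k] nn[of k]] nn[of k] by (simp add: abs_mult)
  qed
  also have "\<dots> = (\<Sum>k\<le>K. a k) * (1 / (2 * sin (t/2)))" by (simp add: sum_divide_distrib)
  also have "\<dots> \<le> 1 * (1 / (2 * sin (t/2)))" using s1 s by (intro mult_right_mono) auto
  finally show ?thesis by simp
qed

lemma abs_mean_kernel_le_abel_bound:
  assumes nn: "\<And>k. 0 \<le> a k" and s: "0 < sin (t/2)" and sr: "sin (real r * t / 2) \<noteq> 0"
  shows "\<bar>mean_kernel a K t\<bar> \<le> abel_bound a K r / (4 * sin (t/2) * \<bar>sin (real r * t / 2)\<bar>)"
proof -
  define c where "c k = cos ((real k + 1/2 - real r/2) * t)" for k
  have eqn: "4 * sin (t/2) * sin (real r * t / 2) * mean_kernel a K t = (\<Sum>k\<le>K. a k * (c k - c (k + r)))"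
  proof -
    have e: "a k * (c k - c (k + r)) = 4 * sin (t/2) * sin (real r * t / 2) * (a k * dirichlet_kernel k t)" for k
      unfolding c_def dirichlet_kernel_mult_sin_sin[symmetric] by (simp add: algebra_simps)
    show ?thesis unfolding mean_kernel_def sum_distrib_left e ..
  qed
  then have "\<bar>4 * sin (t/2) * sin (real r * t / 2) * mean_kernel a K t\<bar> \<le> abel_bound a K r"
  proof -
    have cb: "\<And>k. \<bar>c k\<bar> \<le> 1" by (simp add: c_def)
    show ?thesis unfolding eqn by (rule abs_sum_mult_shift_diff_le[OF nn cb])
  qed
  then have "4 * sin (t/2) * \<bar>sin (real r * t / 2)\<bar> * \<bar>mean_kernel a K t\<bar> \<le> abel_bound a K r"
    using s by (simp add: abs_mult)
  moreover have "0 < 4 * sin (t/2) * \<bar>sin (real r * t / 2)\<bar>" using s sr by simp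
  ultimately show ?thesis by (simp add: field_simps mult.commute)
qed

lemma sum_mean_minus_eq_integral:
  fixes f :: "real \<Rightarrow> real"
  assumes fm[measurable]: "f \<in> borel_measurable borel" and per: "\<And>u. f (u + 2*pi) = f u"
    and fi: "set_integrable lborel {-pi..pi} f"
  shows "set_integrable lborel {0..pi} (\<lambda>t. phi f x t * mean_kernel a K t) \<and>
    (\<Sum>k\<le>K. a k * (fourier_partial_sum f k x - f x)) = (LBINT t:{0..pi}. phi f x t * mean_kernel a K t) / pi"
proof (induction K)
  case 0
  note R = fourier_partial_sum_minus_eq_integral[OF fm per fi, where x=x and k=0]
  have e: "(\<lambda>t. phi f x t * mean_kernel a 0 t) = (\<lambda>t. phi f x t * dirichlet_kernel 0 t * a 0)" by (auto simp: mean_kernel_def)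
  show ?case unfolding e using R by (simp add: set_integrable_mult_left)
next
  case (Suc K)
  note R = fourier_partial_sum_minus_eq_integral[OF fm per fi, where x=x and k="Suc K"]
  have e: "(\<lambda>t. phi f x t * mean_kernel a (Suc K) t) = (\<lambda>t. phi f x t * mean_kernel a K t + phi f x t * dirichlet_kernel (Suc K) t * a (Suc K))"
    by (auto simp: mean_kernel_def algebra_simps)
  have i2: "set_integrable lborel {0..pi} (\<lambda>t. phi f x t * dirichlet_kernel (Suc K) t * a (Suc K))"
    using R(1) by (simp add: set_integrable_mult_left)
  have I: "set_integrable lborel {0..pi} (\<lambda>t. phi f x t * mean_kernel a (Suc K) t)"
    unfolding e using Suc.IH i2 by (intro set_integral_add) auto
  have "(\<Sum>k\<le>Suc K. a k * (fourier_partial_sum f k x - f x))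
      = (LBINT t:{0..pi}. phi f x t * mean_kernel a K t) / pi + a (Suc K) * ((LBINT t:{0..pi}. phi f x t * dirichlet_kernel (Suc K) t) / pi)"
    using Suc.IH R(2) by simp
  also have "\<dots> = ((LBINT t:{0..pi}. phi f x t * mean_kernel a K t) + (LBINT t:{0..pi}. phi f x t * dirichlet_kernel (Suc K) t * a (Suc K))) / pi"
    by (simp add: field_simps)
  also have "(LBINT t:{0..pi}. phi f x t * mean_kernel a K t) + (LBINT t:{0..pi}. phi f x t * dirichlet_kernel (Suc K) t * a (Suc K))
      = (LBINT t:{0..pi}. phi f x t * mean_kernel a (Suc K) t)"
    unfolding e using Suc.IH i2 by (intro set_integral_add(2)[symmetric]) auto
  finally show ?case using I by simp
qed

lemma sum_block_le_shift_variation: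
  fixes a :: "nat \<Rightarrow> real" and r l :: nat
  assumes nn: "\<And>k. 0 \<le> a k" and sa: "summable a" and sd: "summable (\<lambda>k. \<bar>a k - a (k + r)\<bar>)"
    and r: "1 \<le> r"
  shows "(\<Sum>k=l..<l+r. a k) \<le> (\<Sum>k. \<bar>a k - a (k + r)\<bar>)"
proof -
  have tel: "(\<Sum>k=l..<l+r. a k) - (\<Sum>k=l..<l+r. a (k + N*r)) = (\<Sum>i=l..<l+N*r. a i - a (i + r))" for N
  proof (induction N)
    case 0 then show ?case by simp
  next
    case (Suc N)
    have "(\<Sum>i=l..<l+Suc N*r. a i - a (i + r)) = (\<Sum>i=l..<l+N*r. a i - a (i + r)) + (\<Sum>i=l+N*r..<l+N*r+r. a i - a (i + r))"
      by (subst sum.atLeastLessThan_concat[symmetric]) (auto simp: algebra_simps)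
    also have "(\<Sum>i=l+N*r..<l+N*r+r. a i - a (i + r)) = (\<Sum>k=l..<l+r. a (k + N*r) - a (k + N*r + r))"
      using sum.shift_bounds_nat_ivl[of "\<lambda>i. a i - a (i + r)" l "N*r" "l+r"]
      by (simp add: algebra_simps)
    finally show ?case using Suc by (simp add: sum_subtractf algebra_simps)
  qed
  have le: "(\<Sum>k=l..<l+r. a k) - (\<Sum>k=l..<l+r. a (k + N*r)) \<le> (\<Sum>k. \<bar>a k - a (k + r)\<bar>)" for N
  proof -
    have "(\<Sum>i=l..<l+N*r. a i - a (i + r)) \<le> (\<Sum>i=l..<l+N*r. \<bar>a i - a (i + r)\<bar>)"
      by (rule sum_mono) auto
    also have "\<dots> \<le> (\<Sum>i<l+N*r. \<bar>a i - a (i + r)\<bar>)"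
      by (rule sum_mono2) auto
    also have "\<dots> \<le> (\<Sum>k. \<bar>a k - a (k + r)\<bar>)"
      by (rule sum_le_suminf[OF sd]) auto
    finally show ?thesis using tel by simp
  qed
  have z: "(\<lambda>N. a (k + N*r)) \<longlonglongrightarrow> 0" for k
  proof -
    have "filterlim (\<lambda>N. k + N*r) at_top sequentially"
      using r by (intro filterlim_subseq) (auto simp: strict_mono_def)
    then show ?thesis using summable_LIMSEQ_zero[OF sa] by (rule filterlim_compose[rotated])
  qed
  have "(\<lambda>N. (\<Sum>k=l..<l+r. a k) - (\<Sum>k=l..<l+r. a (k + N*r))) \<longlonglongrightarrow> (\<Sum>k=l..<l+r. a k) - (\<Sum>k=l..<l+r. 0)"
    by (intro tendsto_intros z)
  then show ?thesis using le
    by (simp add: LIMSEQ_le_const2)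
qed
lemma abel_bound_tendsto:
  fixes a :: "nat \<Rightarrow> real"
  assumes sa: "summable a" and sd: "summable (\<lambda>k. \<bar>a k - a (k + r)\<bar>)"
  shows "(\<lambda>K. abel_bound a K r) \<longlonglongrightarrow> (\<Sum>k. \<bar>a k - a (k + r)\<bar>) + (\<Sum>k<r. a k)"
proof -
  have "(\<lambda>K. a (K + 1 + i)) \<longlonglongrightarrow> 0" for i
    using LIMSEQ_ignore_initial_segment[OF summable_LIMSEQ_zero[OF sa], of "1 + i"] by (simp add: add.assoc)
  then have "(\<lambda>K. \<Sum>i<r. a (K + 1 + i)) \<longlonglongrightarrow> (\<Sum>i<r. 0)" by (intro tendsto_sum)
  moreover have "(\<Sum>k=K+1..K+r. a k) = (\<Sum>i<r. a (K + 1 + i))" for K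
  proof -
    have "(\<Sum>k=K+1..K+r. a k) = (\<Sum>i=0..<r. a (i + (K + 1)))"
      using sum.shift_bounds_nat_ivl[of a 0 "K+1" r]
      by (simp add: atLeastLessThanSuc_atLeastAtMost[symmetric] add.commute)
    then show ?thesis by (simp add: atLeast0LessThan add.commute add.left_commute)
  qed
  ultimately have "(\<lambda>K. \<Sum>k=K+1..K+r. a k) \<longlonglongrightarrow> 0" by simp
  then have "(\<lambda>K. abel_bound a K r) \<longlonglongrightarrow> (\<Sum>k. \<bar>a k - a (k + r)\<bar>) + (\<Sum>k<r. a k) + 0"
    unfolding abel_bound_def by (intro tendsto_intros summable_LIMSEQ'[OF sd])
  then show ?thesis by simp
qed

lemma abs_suminf_mean_minus_le:
  fixes a S :: "nat \<Rightarrow> real"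
  assumes a: "a sums 1" and sT: "summable (\<lambda>k. a k * S k)"
    and sd: "summable (\<lambda>k. \<bar>a k - a (k + r)\<bar>)"
    and bound: "\<And>K. \<bar>\<Sum>k\<le>K. a k * (S k - y)\<bar> \<le> P + Q * abel_bound a K r"
  shows "\<bar>(\<Sum>k. a k * S k) - y\<bar> \<le> P + Q * ((\<Sum>k. \<bar>a k - a (k + r)\<bar>) + (\<Sum>k<r. a k))"
proof -
  have sa: "summable a" using a by (rule sums_summable)
  have e: "(\<lambda>K. \<Sum>k\<le>K. a k * (S k - y)) = (\<lambda>K. (\<Sum>k\<le>K. a k * S k) - y * (\<Sum>k\<le>K. a k))"
    by (auto simp: algebra_simps sum_subtractf sum_distrib_left)
  have "(\<lambda>K. \<Sum>k\<le>K. a k) \<longlonglongrightarrow> 1"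
    using summable_LIMSEQ'[OF sa] sums_unique[OF a] by simp
  then have "(\<lambda>K. \<Sum>k\<le>K. a k * (S k - y)) \<longlonglongrightarrow> (\<Sum>k. a k * S k) - y * 1"
    unfolding e by (intro tendsto_diff summable_LIMSEQ'[OF sT] tendsto_mult_left)
  then have "(\<lambda>K. \<bar>\<Sum>k\<le>K. a k * (S k - y)\<bar>) \<longlonglongrightarrow> \<bar>(\<Sum>k. a k * S k) - y\<bar>"
    by (simp add: tendsto_rabs)
  moreover have "(\<lambda>K. P + Q * abel_bound a K r)
      \<longlonglongrightarrow> P + Q * ((\<Sum>k. \<bar>a k - a (k + r)\<bar>) + (\<Sum>k<r. a k))"
    by (intro tendsto_intros abel_bound_tendsto[OF sa sd])
  ultimately show ?thesis
    by (rule LIMSEQ_le) (use bound in auto)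
qed

lemma one_le_mult_shift_variation:
  fixes a :: "nat \<Rightarrow> real"
  assumes a: "\<And>k. 0 \<le> a k" "summable a" and sd: "summable (\<lambda>k. \<bar>a k - a (k + r)\<bar>)"
    and r: "1 \<le> r" and C: "0 \<le> C" and window: "1 \<le> C * (\<Sum>l=0..n. \<Sum>k=l..r+l-1. a k)"
  shows "1 \<le> C * (real n + 1) * (\<Sum>k. \<bar>a k - a (k + r)\<bar>)"
proof -
  have "(\<Sum>k=l..r+l-1. a k) \<le> (\<Sum>k. \<bar>a k - a (k + r)\<bar>)" for l
  proof -
    have "{l..r+l-1} = {l..<l+r}" using r by auto
    then show ?thesis using sum_block_le_shift_variation[OF a sd r, of l] by simp
  qed
  then have "(\<Sum>l=0..n. \<Sum>k=l..r+l-1. a k) \<le> (real n + 1) * (\<Sum>k. \<bar>a k - a (k + r)\<bar>)"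
    using sum_mono[of "{0..n}" "\<lambda>l. \<Sum>k=l..r+l-1. a k" "\<lambda>l. \<Sum>k. \<bar>a k - a (k + r)\<bar>"]
    by (simp add: add.commute)
  then have "C * (\<Sum>l=0..n. \<Sum>k=l..r+l-1. a k) \<le> C * ((real n + 1) * (\<Sum>k. \<bar>a k - a (k + r)\<bar>))"
    using C by (rule mult_left_mono)
  then show ?thesis using window by (simp add: mult.assoc)
qed

section \<open>Estimates on a single cell\<close>

locale modulus_setting =
  fixes p \<beta> \<gamma> :: real and r :: nat and \<omega> :: "real \<Rightarrow> real"
  assumes p: "1 \<le> p" and \<beta>: "0 \<le> \<beta>" and \<gamma>: "0 < \<gamma>" "\<gamma> < \<beta> + 1/p" and r: "1 \<le> r"
    and modulus: "modulus_type \<omega>" and \<omega>_pos: "\<And>t. 0 < t \<Longrightarrow> t \<le> 2*pi \<Longrightarrow> 0 < \<omega> t"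
begin

definition approximation_constant :: "real \<Rightarrow> real" where
  "approximation_constant C = (r + 1) / pi * ((pi / 2 + 4 * pi / sin (pi / (2 * r))) * C ^ 3
     + (r + 1 / sin (pi / (2 * r))) * (pi / r) powr (1 + \<gamma> - 1/p) * powr_norm_const p (\<gamma> - 1 - \<beta>) * C)"

end

text \<open>\<open>N\<close> plays the role of \<open>n + 1\<close>, and \<open>\<delta>\<close> is the distance from a zero of \<open>sin (r t / 2)\<close>
  at which the estimate of the kernel switches from one bound to the other.\<close>
locale cell_setting = modulus_setting +
  fixes N :: real
  assumes N: "1 \<le> N"
begin

abbreviation W :: "real \<Rightarrow> real" where "W \<equiv> modulus_extension \<omega>"

lemma W_measurable[measurable]: "W \<in> borel_measurable borel"
  by (rule borel_measurable_modulus_extension[OF modulus])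

definition \<delta> :: real where "\<delta> = pi / (r * N)"

definition \<epsilon> :: real where "\<epsilon> = \<gamma> - 1 - \<beta>"

definition near_bound :: "real \<Rightarrow> real \<Rightarrow> real" where
  "near_bound X Y = (pi / 2 + \<omega> pi * \<delta> / (sin (pi / (2 * r)) * \<omega> \<delta>)) * (X * Y)"

definition far_bound :: "real \<Rightarrow> real" where
  "far_bound X = (pi * \<omega> \<delta> / (2 * \<delta>) + \<omega> pi / (4 * sin (pi / (2 * r))))
     * (pi / r) powr (1 + \<beta>) * (powr_norm_const p \<epsilon> * \<delta> powr (\<epsilon> + 1 - 1/p)) * X"

lemma r_pos: "0 < real r" using r by simp

lemma \<delta>_pos: "0 < \<delta>" using r N by (simp add: \<delta>_def)

lemma pi_div_r_le: "pi / r \<le> pi"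
  using r by (simp add: field_simps mult_le_cancel_left1)

lemma \<delta>_le: "\<delta> \<le> pi / r"
  using r N by (simp add: \<delta>_def field_simps mult_le_cancel_left1)

lemma \<epsilon>_exponent: "\<epsilon> + 1 - 1/p < 0" using \<gamma> by (simp add: \<epsilon>_def)

lemma \<omega>_\<delta>_pos: "0 < \<omega> \<delta>"
  using \<omega>_pos \<delta>_pos \<delta>_le pi_div_r_le by simp

lemma sin_pi_div_2r_pos: "0 < sin (pi / (2 * r))"
  using r pi_gt_zero by (intro sin_gt_zero) (auto simp: field_simps)

lemma sin_r_pos:
  fixes s :: real
  assumes "0 < s" "s \<le> pi / r" shows "0 < sin (r * s / 2)"
proof -
  have "r * s \<le> pi" using assms r_pos by (simp add: field_simps)
  moreover have "0 < r * s" using assms r_pos by simp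
  ultimately show ?thesis using pi_gt_zero by (intro sin_gt_zero) linarith+
qed

lemma sin_r_ge:
  fixes s :: real
  shows "0 \<le> s \<Longrightarrow> s \<le> pi / r \<Longrightarrow> r * s / pi \<le> sin (r * s / 2)"
  using sin_mult_half_ge[of "real r" s] r_pos by simp

lemma near_far_bound_nonneg:
  assumes "0 \<le> X" "0 \<le> Y"
  shows "0 \<le> near_bound X Y" "0 \<le> far_bound X"
  using assms \<delta>_pos \<omega>_\<delta>_pos sin_pi_div_2r_pos modulus_type_nonneg[OF modulus, of pi]
    powr_norm_const_nonneg
  by (auto simp: near_bound_def far_bound_def)

lemma abs_weight_far_le:
  fixes s v K :: real
  assumes s: "\<delta> \<le> s" "s \<le> pi / r" and v: "0 \<le> v" "v \<le> K"
  shows "\<bar>v * s powr \<gamma> / sin (r * s / 2) powr (1 + \<beta>)\<bar> \<le> K * (pi / r) powr (1 + \<beta>) * \<bar>s powr \<epsilon>\<bar>"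
proof -
  have s0: "0 < s" using s \<delta>_pos by auto
  have sp: "0 < sin (r * s / 2)" using sin_r_pos s0 s by auto
  have "1 / sin (r * s / 2) powr (1 + \<beta>) = (1 / sin (r * s / 2)) powr (1 + \<beta>)"
    using sp by (simp add: powr_divide)
  also have "\<dots> \<le> (1 / (r * s / pi)) powr (1 + \<beta>)"
    using sp sin_r_ge[of s] s0 s r_pos \<beta> by (intro powr_mono2 divide_left_mono) auto
  also have "\<dots> = (pi / r) powr (1 + \<beta>) * s powr (- (1 + \<beta>))"
  proof -
    have "(1 / (r * s / pi)) powr (1 + \<beta>) = (pi / r) powr (1 + \<beta>) * (1 / s) powr (1 + \<beta>)"
      by (simp add: powr_mult[symmetric])
    also have "(1 / s) powr (1 + \<beta>) = s powr (- (1 + \<beta>))"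
      using s0 powr_minus_divide[of s "1 + \<beta>"] by (simp add: powr_divide)
    finally show ?thesis .
  qed
  finally have inv: "1 / sin (r * s / 2) powr (1 + \<beta>) \<le> (pi / r) powr (1 + \<beta>) * s powr (- (1 + \<beta>))" .
  have "\<bar>v * s powr \<gamma> / sin (r * s / 2) powr (1 + \<beta>)\<bar> = v * s powr \<gamma> * (1 / sin (r * s / 2) powr (1 + \<beta>))"
    using v sp by simp
  also have "\<dots> \<le> K * s powr \<gamma> * ((pi / r) powr (1 + \<beta>) * s powr (- (1 + \<beta>)))"
    using v inv s0 sp by (intro mult_mono) auto
  also have "\<dots> = K * (pi / r) powr (1 + \<beta>) * (s powr \<gamma> * s powr (- (1 + \<beta>)))"
    by simp
  also have "s powr \<gamma> * s powr (- (1 + \<beta>)) = s powr \<epsilon>"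
  proof -
    have "\<gamma> + - (1 + \<beta>) = \<epsilon>" by (simp add: \<epsilon>_def)
    then show ?thesis by (simp only: powr_add[symmetric])
  qed
  finally show ?thesis by simp
qed

lemma dual_norm_le_weight_far:
  assumes [measurable]: "v \<in> borel_measurable borel" and v: "\<And>s. \<delta> \<le> s \<Longrightarrow> s \<le> pi / r \<Longrightarrow> 0 \<le> v s \<and> v s \<le> K"
  shows "dual_norm_le p {\<delta>..pi / r} (\<lambda>s. v s * s powr \<gamma> / sin (r * s / 2) powr (1 + \<beta>))
      (K * (pi / r) powr (1 + \<beta>) * (powr_norm_const p \<epsilon> * \<delta> powr (\<epsilon> + 1 - 1/p)))"
proof (rule dual_norm_le_mono[OF p _ _ _ _ dual_norm_le_powr[OF p \<delta>_pos \<delta>_le \<epsilon>_exponent]])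
  have "0 \<le> K" using v[of \<delta>] \<delta>_le by auto
  then show "0 \<le> K * (pi / r) powr (1 + \<beta>)" by simp
qed (use abs_weight_far_le v in auto)

lemma dual_norm_le_weight_near:
  assumes [measurable]: "v \<in> borel_measurable borel" and v: "\<And>s. 0 < s \<Longrightarrow> s \<le> \<delta> \<Longrightarrow> 0 \<le> v s \<and> v s \<le> K"
    and K: "0 \<le> K"
    and H1: "dual_norm_le p {0..\<delta>} (\<lambda>s. W s / (s * sin (r * s / 2) powr \<beta>)) Y"
  shows "dual_norm_le p {0..\<delta>} (\<lambda>s. v s / sin (r * s / 2) powr \<beta>) (K * (2 * \<delta> / \<omega> \<delta>) * Y)"
proof (rule dual_norm_le_mono[OF p _ _ _ _ H1])
  fix s assume s: "s \<in> {0..\<delta>}"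
  show "\<bar>v s / sin (r * s / 2) powr \<beta>\<bar> \<le> K * (2 * \<delta> / \<omega> \<delta>) * \<bar>W s / (s * sin (r * s / 2) powr \<beta>)\<bar>"
  proof (cases "s = 0")
    case False
    then have s0: "0 < s" and spi: "s \<le> pi / r" using s \<delta>_le by auto
    have P: "0 < sin (r * s / 2) powr \<beta>" using sin_r_pos[OF s0 spi] by simp
    have Ws: "W s = \<omega> s" "0 < \<omega> s" using \<omega>_pos s0 spi pi_div_r_le by (auto simp: modulus_extension_eq)
    \<comment> \<open>\<open>\<omega> t / t\<close> is almost decreasing, so \<open>\<omega> s / s\<close> is at least \<open>\<omega> \<delta> / (2 \<delta>)\<close> for \<open>s \<le> \<delta>\<close>\<close>
    have "\<omega> \<delta> * s \<le> 2 * \<omega> s * \<delta>"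
      using modulus_type_ratio_le[OF modulus s0, of \<delta>] s \<delta>_le pi_div_r_le by auto
    then have "1 \<le> (2 * \<delta> / \<omega> \<delta>) * (\<omega> s / s)"
      using \<omega>_\<delta>_pos s0 by (simp add: field_simps)
    then have "v s / sin (r * s / 2) powr \<beta> * 1 \<le> K / sin (r * s / 2) powr \<beta> * ((2 * \<delta> / \<omega> \<delta>) * (\<omega> s / s))"
      using v[OF s0] s P K by (intro mult_mono divide_right_mono) auto
    then show ?thesis using P Ws s0 v[OF s0] s by (simp add: abs_mult field_simps)
  qed simp
qed (use K \<delta>_pos \<omega>_\<delta>_pos in auto)

lemma abs_mean_kernel_first_cell_le:
  fixes s :: real
  assumes a: "\<And>k. 0 \<le> a k" "(\<Sum>k\<le>K. a k) \<le> 1" and s: "0 < s" "s \<le> pi / r"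
  shows "\<bar>mean_kernel a K s\<bar> \<le> pi / (2 * s)"
    and "\<bar>mean_kernel a K s\<bar> \<le> abel_bound a K r * pi / (4 * s * sin (r * s / 2))"
proof -
  have s_pi: "s \<le> pi" using s pi_div_r_le by linarith
  have sin_half: "s / pi \<le> sin (s / 2)" using sin_half_ge[of s] s s_pi by simp
  have sp: "0 < s / pi" using s by simp
  have sh0: "0 < sin (s / 2)" using sin_half sp by linarith
  have sin_r: "\<bar>sin (r * s / 2)\<bar> = sin (r * s / 2)" "0 < sin (r * s / 2)"
    using sin_r_pos[OF s] by auto
  have "\<bar>mean_kernel a K s\<bar> \<le> 1 / (2 * sin (s / 2))"
    using s s_pi pi_gt_zero by (intro abs_mean_kernel_le[OF a]) linarith+
  also have "\<dots> \<le> 1 / (2 * (s / pi))"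
    using sin_half sp sh0 by (intro divide_left_mono mult_pos_pos) auto
  finally show "\<bar>mean_kernel a K s\<bar> \<le> pi / (2 * s)" by simp
  have "\<bar>mean_kernel a K s\<bar> \<le> abel_bound a K r / (4 * sin (s / 2) * \<bar>sin (r * s / 2)\<bar>)"
    using sin_half sp sin_r by (intro abs_mean_kernel_le_abel_bound a) auto
  also have "\<dots> \<le> abel_bound a K r / (4 * (s / pi) * sin (r * s / 2))"
  proof (rule divide_left_mono)
    have "s / pi * sin (r * s / 2) \<le> sin (s / 2) * sin (r * s / 2)"
      using sin_half sin_r by (intro mult_right_mono) auto
    then show "4 * (s / pi) * sin (r * s / 2) \<le> 4 * sin (s / 2) * \<bar>sin (r * s / 2)\<bar>"
      unfolding sin_r(1) by linarith
    show "0 < 4 * sin (s / 2) * \<bar>sin (r * s / 2)\<bar> * (4 * (s / pi) * sin (r * s / 2))"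
      using sp sin_r sh0 by (intro mult_pos_pos) auto
  qed (rule abel_bound_nonneg[OF a(1)])
  finally show "\<bar>mean_kernel a K s\<bar> \<le> abel_bound a K r * pi / (4 * s * sin (r * s / 2))"
    by simp
qed

lemma abs_mean_kernel_far_cell_le:
  fixes t S :: real
  assumes a: "\<And>k. 0 \<le> a k" "(\<Sum>k\<le>K. a k) \<le> 1"
    and t: "pi / r \<le> t" "t \<le> pi" and S: "\<bar>sin (r * t / 2)\<bar> = S" "0 < S"
  shows "\<bar>mean_kernel a K t\<bar> \<le> 1 / (2 * sin (pi / (2 * r)))"
    and "\<bar>mean_kernel a K t\<bar> \<le> abel_bound a K r / (4 * sin (pi / (2 * r)) * S)"
proof -
  have "0 < pi / r" using r_pos by simp
  then have t0: "0 < t" using t by linarith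
  have mono: "sin (pi / (2 * r)) \<le> sin (t / 2)"
  proof (rule sin_monotone_2pi_le)
    have "0 \<le> pi / (2 * r)" by simp
    then show "- (pi / 2) \<le> pi / (2 * r)" using pi_gt_zero by linarith
    show "pi / (2 * r) \<le> t / 2" using t by simp
    show "t / 2 \<le> pi / 2" using t by simp
  qed
  have sp: "0 < sin (pi / (2 * r))" by (rule sin_pi_div_2r_pos)
  have "\<bar>mean_kernel a K t\<bar> \<le> 1 / (2 * sin (t / 2))"
    using t0 t pi_gt_zero by (intro abs_mean_kernel_le[OF a]) linarith+
  also have "\<dots> \<le> 1 / (2 * sin (pi / (2 * r)))" using mono sp by (intro divide_left_mono) auto
  finally show "\<bar>mean_kernel a K t\<bar> \<le> 1 / (2 * sin (pi / (2 * r)))" .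
  have st: "0 < sin (t / 2)" using mono sp by linarith
  have "\<bar>mean_kernel a K t\<bar> \<le> abel_bound a K r / (4 * sin (t / 2) * \<bar>sin (r * t / 2)\<bar>)"
    using S by (intro abs_mean_kernel_le_abel_bound[OF a(1) st]) auto
  also have "\<dots> \<le> abel_bound a K r / (4 * sin (pi / (2 * r)) * S)"
  proof (rule divide_left_mono)
    have "sin (pi / (2 * r)) * S \<le> sin (t / 2) * S"
      using mono S by (intro mult_right_mono) auto
    then show "4 * sin (pi / (2 * r)) * S \<le> 4 * sin (t / 2) * \<bar>sin (r * t / 2)\<bar>"
      unfolding S(1) by linarith
    show "0 < 4 * sin (t / 2) * \<bar>sin (r * t / 2)\<bar> * (4 * sin (pi / (2 * r)) * S)"
      using st sp S by (intro mult_pos_pos) auto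
  qed (rule abel_bound_nonneg[OF a(1)])
  finally show "\<bar>mean_kernel a K t\<bar> \<le> abel_bound a K r / (4 * sin (pi / (2 * r)) * S)" .
qed

lemma first_cell_bound_le:
  assumes X: "0 \<le> X1" "0 \<le> X2" and Y: "0 \<le> Y" and B: "0 \<le> B"
  shows "pi / 2 * (X1 * Y) + B * pi / 4 * (X2 * (2 * \<omega> \<delta> / \<delta> * (pi / r) powr (1 + \<beta>)
      * (powr_norm_const p \<epsilon> * \<delta> powr (\<epsilon> + 1 - 1/p))))
    \<le> near_bound X1 Y + B * far_bound X2"
proof (rule add_mono)
  define R where "R = (pi / r) powr (1 + \<beta>) * (powr_norm_const p \<epsilon> * \<delta> powr (\<epsilon> + 1 - 1/p))"
  show "pi / 2 * (X1 * Y) \<le> near_bound X1 Y"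
    unfolding near_bound_def using X Y \<delta>_pos \<omega>_\<delta>_pos sin_pi_div_2r_pos modulus_type_nonneg[OF modulus, of pi]
    by (intro mult_right_mono) auto
  have "B * pi / 4 * (X2 * (2 * \<omega> \<delta> / \<delta> * (pi / r) powr (1 + \<beta>)
      * (powr_norm_const p \<epsilon> * \<delta> powr (\<epsilon> + 1 - 1/p)))) = B * (pi * \<omega> \<delta> / (2 * \<delta>) * R * X2)"
    using \<delta>_pos by (simp add: R_def field_simps)
  also have "\<dots> \<le> B * ((pi * \<omega> \<delta> / (2 * \<delta>) + \<omega> pi / (4 * sin (pi / (2 * r)))) * R * X2)"
    using B X powr_norm_const_nonneg sin_pi_div_2r_pos modulus_type_nonneg[OF modulus, of pi]
    by (intro mult_left_mono mult_right_mono) (auto simp: R_def)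
  also have "\<dots> = B * far_bound X2"
    by (simp add: far_bound_def R_def mult.assoc)
  finally show "B * pi / 4 * (X2 * (2 * \<omega> \<delta> / \<delta> * (pi / r) powr (1 + \<beta>)
      * (powr_norm_const p \<epsilon> * \<delta> powr (\<epsilon> + 1 - 1/p)))) \<le> B * far_bound X2" .
qed

lemma nn_integral_first_cell_le:
  fixes u k :: "real \<Rightarrow> real"
  assumes [measurable]: "u \<in> borel_measurable borel" "k \<in> borel_measurable borel"
    and u: "\<And>s::real. 0 \<le> u s" and B: "0 \<le> B"
    and k_near: "\<And>s::real. 0 < s \<Longrightarrow> s \<le> \<delta> \<Longrightarrow> \<bar>k s\<bar> \<le> pi / (2 * s)"
    and k_far: "\<And>s::real. \<delta> \<le> s \<Longrightarrow> s \<le> pi / r \<Longrightarrow> \<bar>k s\<bar> \<le> B * pi / (4 * s * sin (r * s / 2))"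
    and H1: "dual_norm_le p {0..\<delta>} (\<lambda>s. W s / (s * sin (r * s / 2) powr \<beta>)) Y" and Y: "0 \<le> Y"
    and H2: "Lnorm_le p {0..\<delta>} (\<lambda>s. u s / W s * sin (r * s / 2) powr \<beta>) X1"
    and H3: "Lnorm_le p {\<delta>..pi / r} (\<lambda>s. u s * sin (r * s / 2) powr \<beta> / (W s * s powr \<gamma>)) X2"
  shows "(\<integral>\<^sup>+s\<in>{0..pi / r}. ennreal (u s * \<bar>k s\<bar>) \<partial>lborel) \<le> ennreal (near_bound X1 Y + B * far_bound X2)"
proof -
  have X: "0 \<le> X1" "0 \<le> X2" using H2 H3 by (auto simp: Lnorm_le_def)
  have W: "W s = \<omega> s" "0 < \<omega> s" "0 < sin (r * s / 2)" if "0 < s" "s \<le> pi / r" for s :: real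
    using that sin_r_pos \<omega>_pos pi_div_r_le by (auto simp: modulus_extension_eq)
  have weight: "dual_norm_le p {\<delta>..pi / r} (\<lambda>s. W s / s * s powr \<gamma> / sin (r * s / 2) powr (1 + \<beta>))
      (2 * \<omega> \<delta> / \<delta> * (pi / r) powr (1 + \<beta>) * (powr_norm_const p \<epsilon> * \<delta> powr (\<epsilon> + 1 - 1/p)))"
  proof (rule dual_norm_le_weight_far)
    fix s assume s: "\<delta> \<le> s" "s \<le> pi / r"
    then have "0 < s" using \<delta>_pos by linarith
    moreover have "\<omega> s * \<delta> \<le> 2 * \<omega> \<delta> * s"
      using modulus_type_ratio_le[OF modulus \<delta>_pos, of s] s pi_div_r_le by simp
    ultimately show "0 \<le> W s / s \<and> W s / s \<le> 2 * \<omega> \<delta> / \<delta>"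
      using W[of s] s \<delta>_pos by (simp add: field_simps less_imp_le)
  qed measurable
  have "(\<integral>\<^sup>+s\<in>{0..pi / r}. ennreal (u s * \<bar>k s\<bar>) \<partial>lborel)
      \<le> ennreal (pi / 2 * (X1 * Y) + B * pi / 4 * (X2 * (2 * \<omega> \<delta> / \<delta> * (pi / r) powr (1 + \<beta>)
          * (powr_norm_const p \<epsilon> * \<delta> powr (\<epsilon> + 1 - 1/p)))))"
  proof (rule nn_integral_split_Holder[OF p \<delta>_pos \<delta>_le _ _ _ _ _ _ H2 H1 H3 weight])
    fix s assume s: "0 < s" "s \<le> \<delta>"
    then have "u s * \<bar>k s\<bar> \<le> u s * (pi / (2 * s))" using k_near u by (intro mult_left_mono) auto
    also have "\<dots> = pi / 2 * (\<bar>u s / W s * sin (r * s / 2) powr \<beta>\<bar> * \<bar>W s / (s * sin (r * s / 2) powr \<beta>)\<bar>)"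
      using W[of s] s \<delta>_le u[of s] by (simp add: abs_mult field_simps)
    finally show "u s * \<bar>k s\<bar> \<le> \<dots>" .
  next
    fix s assume s: "\<delta> \<le> s" "s \<le> pi / r"
    then have s0: "0 < s" using \<delta>_pos by linarith
    have "u s * \<bar>k s\<bar> \<le> u s * (B * pi / (4 * s * sin (r * s / 2)))" using k_far s u by (intro mult_left_mono) auto
    also have "\<dots> = B * pi / 4 * (\<bar>u s * sin (r * s / 2) powr \<beta> / (W s * s powr \<gamma>)\<bar>
        * \<bar>W s / s * s powr \<gamma> / sin (r * s / 2) powr (1 + \<beta>)\<bar>)"
      using W[OF s0 s(2)] s0 u[of s] by (simp add: abs_mult powr_add field_simps)
    finally show "u s * \<bar>k s\<bar> \<le> \<dots>" .
  qed (use u B Y X \<delta>_pos \<omega>_\<delta>_pos powr_norm_const_nonneg in auto)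
  also have "\<dots> \<le> ennreal (near_bound X1 Y + B * far_bound X2)"
    using X Y B by (intro ennreal_leI first_cell_bound_le)
  finally show ?thesis .
qed

lemma shifted_cell_bound_le:
  assumes X: "0 \<le> X1" "0 \<le> X2" and Y: "0 \<le> Y" and B: "0 \<le> B"
  shows "1 / (2 * sin (pi / (2 * r))) * (X1 * (\<omega> pi * (2 * \<delta> / \<omega> \<delta>) * Y))
      + B / (4 * sin (pi / (2 * r))) * (X2 * (\<omega> pi * (pi / r) powr (1 + \<beta>)
        * (powr_norm_const p \<epsilon> * \<delta> powr (\<epsilon> + 1 - 1/p))))
    \<le> near_bound X1 Y + B * far_bound X2"
proof (rule add_mono)
  define c where "c = sin (pi / (2 * r))"
  define R where "R = (pi / r) powr (1 + \<beta>) * (powr_norm_const p \<epsilon> * \<delta> powr (\<epsilon> + 1 - 1/p))"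
  have c: "0 < c" using sin_pi_div_2r_pos by (simp add: c_def)
  have R: "0 \<le> R" using powr_norm_const_nonneg by (simp add: R_def)
  have "1 / (2 * c) * (X1 * (\<omega> pi * (2 * \<delta> / \<omega> \<delta>) * Y)) = \<omega> pi * \<delta> / (c * \<omega> \<delta>) * (X1 * Y)"
    using c \<omega>_\<delta>_pos by (simp add: field_simps)
  also have "\<dots> \<le> near_bound X1 Y"
    unfolding near_bound_def c_def[symmetric] using X Y by (intro mult_right_mono) auto
  finally show "1 / (2 * sin (pi / (2 * r))) * (X1 * (\<omega> pi * (2 * \<delta> / \<omega> \<delta>) * Y)) \<le> near_bound X1 Y"
    by (simp only: c_def)
  have "B / (4 * c) * (X2 * (\<omega> pi * (pi / r) powr (1 + \<beta>)
      * (powr_norm_const p \<epsilon> * \<delta> powr (\<epsilon> + 1 - 1/p)))) = B * (\<omega> pi / (4 * c) * R * X2)"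
    by (simp add: R_def field_simps)
  also have "\<dots> \<le> B * ((pi * \<omega> \<delta> / (2 * \<delta>) + \<omega> pi / (4 * c)) * R * X2)"
    using B X R \<delta>_pos \<omega>_\<delta>_pos by (intro mult_left_mono mult_right_mono) auto
  also have "\<dots> = B * far_bound X2"
    by (simp add: far_bound_def R_def c_def mult.assoc)
  finally show "B / (4 * sin (pi / (2 * r))) * (X2 * (\<omega> pi * (pi / r) powr (1 + \<beta>)
      * (powr_norm_const p \<epsilon> * \<delta> powr (\<epsilon> + 1 - 1/p)))) \<le> B * far_bound X2"
    by (simp only: c_def)
qed

lemma nn_integral_shifted_cell_le:
  fixes u k w :: "real \<Rightarrow> real"
  assumes [measurable]: "u \<in> borel_measurable borel" "k \<in> borel_measurable borel"
      "w \<in> borel_measurable borel"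
    and u: "\<And>s::real. 0 \<le> u s" and B: "0 \<le> B"
    and w: "\<And>s::real. 0 \<le> s \<Longrightarrow> s \<le> pi / r \<Longrightarrow> 0 < w s \<and> w s \<le> \<omega> pi"
    and k_near: "\<And>s::real. 0 < s \<Longrightarrow> s \<le> \<delta> \<Longrightarrow> \<bar>k s\<bar> \<le> 1 / (2 * sin (pi / (2 * r)))"
    and k_far: "\<And>s::real. \<delta> \<le> s \<Longrightarrow> s \<le> pi / r \<Longrightarrow>
      \<bar>k s\<bar> \<le> B / (4 * sin (pi / (2 * r)) * sin (r * s / 2))"
    and H1: "dual_norm_le p {0..\<delta>} (\<lambda>s. W s / (s * sin (r * s / 2) powr \<beta>)) Y" and Y: "0 \<le> Y"
    and H2: "Lnorm_le p {0..\<delta>} (\<lambda>s. u s / w s * sin (r * s / 2) powr \<beta>) X1"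
    and H3: "Lnorm_le p {\<delta>..pi / r} (\<lambda>s. u s * sin (r * s / 2) powr \<beta> / (w s * s powr \<gamma>)) X2"
  shows "(\<integral>\<^sup>+s\<in>{0..pi / r}. ennreal (u s * \<bar>k s\<bar>) \<partial>lborel) \<le> ennreal (near_bound X1 Y + B * far_bound X2)"
proof -
  have c: "0 < sin (pi / (2 * r))" by (rule sin_pi_div_2r_pos)
  have X: "0 \<le> X1" "0 \<le> X2" using H2 H3 by (auto simp: Lnorm_le_def)
  have \<omega>_pi: "0 \<le> \<omega> pi" using modulus_type_nonneg[OF modulus, of pi] by simp
  have weight_near: "dual_norm_le p {0..\<delta>} (\<lambda>s. w s / sin (r * s / 2) powr \<beta>) (\<omega> pi * (2 * \<delta> / \<omega> \<delta>) * Y)"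
    by (rule dual_norm_le_weight_near[OF _ _ \<omega>_pi H1]) (use w \<delta>_le in \<open>auto simp: less_imp_le\<close>)
  have weight_far: "dual_norm_le p {\<delta>..pi / r} (\<lambda>s. w s * s powr \<gamma> / sin (r * s / 2) powr (1 + \<beta>))
      (\<omega> pi * (pi / r) powr (1 + \<beta>) * (powr_norm_const p \<epsilon> * \<delta> powr (\<epsilon> + 1 - 1/p)))"
    by (rule dual_norm_le_weight_far) (use w \<delta>_pos in \<open>auto simp: less_imp_le\<close>)
  have "(\<integral>\<^sup>+s\<in>{0..pi / r}. ennreal (u s * \<bar>k s\<bar>) \<partial>lborel)
      \<le> ennreal (1 / (2 * sin (pi / (2 * r))) * (X1 * (\<omega> pi * (2 * \<delta> / \<omega> \<delta>) * Y))
        + B / (4 * sin (pi / (2 * r))) * (X2 * (\<omega> pi * (pi / r) powr (1 + \<beta>)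
            * (powr_norm_const p \<epsilon> * \<delta> powr (\<epsilon> + 1 - 1/p)))))"
  proof (rule nn_integral_split_Holder[OF p \<delta>_pos \<delta>_le _ _ _ _ _ _ H2 weight_near H3 weight_far])
    fix s :: real assume s: "0 < s" "s \<le> \<delta>"
    then have ws: "0 < w s" "0 < sin (r * s / 2)" using w sin_r_pos \<delta>_le by auto
    have "u s * \<bar>k s\<bar> \<le> u s * (1 / (2 * sin (pi / (2 * r))))" using k_near s u by (intro mult_left_mono) auto
    also have "\<dots> = 1 / (2 * sin (pi / (2 * r)))
        * (\<bar>u s / w s * sin (r * s / 2) powr \<beta>\<bar> * \<bar>w s / sin (r * s / 2) powr \<beta>\<bar>)"
      using ws u[of s] by (simp add: abs_mult field_simps)
    finally show "u s * \<bar>k s\<bar> \<le> \<dots>" .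
  next
    fix s :: real assume s: "\<delta> \<le> s" "s \<le> pi / r"
    then have s0: "0 < s" using \<delta>_pos by linarith
    then have ws: "0 < w s" "0 < sin (r * s / 2)" using w sin_r_pos s by auto
    have "u s * \<bar>k s\<bar> \<le> u s * (B / (4 * sin (pi / (2 * r)) * sin (r * s / 2)))"
      using k_far s u by (intro mult_left_mono) auto
    also have "\<dots> = B / (4 * sin (pi / (2 * r))) * (\<bar>u s * sin (r * s / 2) powr \<beta> / (w s * s powr \<gamma>)\<bar>
        * \<bar>w s * s powr \<gamma> / sin (r * s / 2) powr (1 + \<beta>)\<bar>)"
      using ws s0 u[of s] by (simp add: abs_mult powr_add field_simps)
    finally show "u s * \<bar>k s\<bar> \<le> \<dots>" .
  qed (use u B c Y X \<delta>_pos \<omega>_\<delta>_pos \<omega>_pi powr_norm_const_nonneg in auto)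
  also have "\<dots> \<le> ennreal (near_bound X1 Y + B * far_bound X2)"
    using X Y B by (intro ennreal_leI shifted_cell_bound_le)
  finally show ?thesis .
qed

end

section \<open>Covering the half period by cells\<close>

text \<open>The zeros \<open>2 m \<pi> / r\<close> of \<open>sin (r t / 2)\<close> cut \<open>[0, \<pi>]\<close> into cells of length \<open>\<pi> / r\<close>, each
  with such a zero at one end; these are the intervals of the hypotheses (ii)-(iv).\<close>
definition right_cell :: "nat \<Rightarrow> nat \<Rightarrow> real set" where
  "right_cell r m = {2 * real m * pi / r .. 2 * real m * pi / r + pi / r}"
definition left_cell :: "nat \<Rightarrow> nat \<Rightarrow> real set" where
  "left_cell r m = {2 * real (m + 1) * pi / r - pi / r .. 2 * real (m + 1) * pi / r}"

lemma pi_mem_left_cell: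
  assumes "even r" "2 \<le> r"
  shows "pi \<in> left_cell r (r div 2 - 1)"
proof -
  have "2 * real (r div 2 - 1 + 1) = real r" using assms by (simp add: real_of_nat_div)
  then have "2 * real (r div 2 - 1 + 1) * pi / r = pi" using assms by simp
  moreover have "pi / r \<le> pi" using assms by (simp add: field_simps mult_le_cancel_left1)
  ultimately show ?thesis unfolding left_cell_def by simp
qed

lemma cells_cover:
  assumes r: "1 \<le> r" and t: "0 \<le> t" "t \<le> pi"
  shows "(\<exists>m\<in>M_set r. t \<in> right_cell r m) \<or> (\<exists>m\<in>{..<r div 2}. t \<in> left_cell r m)"
proof -
  define m where "m = nat \<lfloor>t * r / (2 * pi)\<rfloor>"
  have rp: "0 < real r" using r by simp
  have "real m \<le> t * r / (2 * pi)" "t * r / (2 * pi) < real m + 1"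
    unfolding m_def using t rp by (simp_all add: of_nat_nat)
  then have lo: "2 * real m * pi / r \<le> t" and hi: "t < 2 * real (m + 1) * pi / r"
    using rp by (simp_all add: field_simps)
  have tr: "t * r \<le> pi * r" using t rp by (simp add: mult_right_mono)
  show ?thesis
  proof (cases "t \<le> 2 * real m * pi / r + pi / r")
    case True
    have "2 * real m * pi \<le> t * r" using lo rp by (simp add: field_simps)
    then have "2 * real m * pi \<le> pi * r" using tr by linarith
    then have "2 * m \<le> r" by (simp add: mult.commute)
    show ?thesis
    proof (cases "m \<in> M_set r")
      case False
      with \<open>2 * m \<le> r\<close> have "even r" "m = r div 2" by (auto simp: M_set_def split: if_splits)
      then have "t = pi" "2 \<le> r" using lo t rp r by (auto simp: real_of_nat_div field_simps)
      then show ?thesis using pi_mem_left_cell[OF \<open>even r\<close>] by auto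
    qed (use lo True in \<open>auto simp: right_cell_def\<close>)
  next
    case False
    then have "(2 * real m + 1) * pi < t * r" using rp by (simp add: field_simps)
    then have "(2 * real m + 1) * pi < pi * r" using tr by linarith
    then have "2 * real m + 1 < real r" by simp
    then have "2 * m + 1 < r" by linarith
    then have "m < r div 2" by auto
    moreover have "t \<in> left_cell r m"
      using False hi unfolding left_cell_def by (auto simp: field_simps add_divide_distrib)
    ultimately show ?thesis by blast
  qed
qed

lemma indicator_le_sum_cells:
  assumes r: "1 \<le> r"
  shows "indicator {0..pi} t \<le> (\<Sum>m\<in>M_set r. indicator (right_cell r m) t)
    + (\<Sum>m<r div 2. indicator (left_cell r m) t :: ennreal)"
proof (cases "t \<in> {0..pi}")
  case True
  have fin: "finite (M_set r)" by (simp add: M_set_def)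
  have "(\<exists>m\<in>M_set r. t \<in> right_cell r m) \<or> (\<exists>m\<in>{..<r div 2}. t \<in> left_cell r m)"
    using cells_cover[OF r, of t] True by auto
  then show ?thesis
  proof (elim disjE bexE)
    fix m assume "m \<in> M_set r" "t \<in> right_cell r m"
    then have "indicator {0..pi} t \<le> (\<Sum>m\<in>M_set r. indicator (right_cell r m) t :: ennreal)"
      using True fin member_le_sum[of m "M_set r" "\<lambda>m. indicator (right_cell r m) t :: ennreal"] by simp
    then show ?thesis by (simp add: add_increasing2)
  next
    fix m assume "m \<in> {..<r div 2}" "t \<in> left_cell r m"
    then have "indicator {0..pi} t \<le> (\<Sum>m<r div 2. indicator (left_cell r m) t :: ennreal)"
      using True member_le_sum[of m "{..<r div 2}" "\<lambda>m. indicator (left_cell r m) t :: ennreal"] by simp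
    then show ?thesis by (simp add: add_increasing)
  qed
qed simp

lemma nn_integral_le_sum_cells:
  fixes G :: "real \<Rightarrow> ennreal"
  assumes r: "1 \<le> r" and [measurable]: "G \<in> borel_measurable borel"
  shows "(\<integral>\<^sup>+t\<in>{0..pi}. G t \<partial>lborel)
    \<le> (\<Sum>m\<in>M_set r. \<integral>\<^sup>+t\<in>right_cell r m. G t \<partial>lborel) + (\<Sum>m<r div 2. \<integral>\<^sup>+t\<in>left_cell r m. G t \<partial>lborel)"
proof -
  have "(\<integral>\<^sup>+t\<in>{0..pi}. G t \<partial>lborel)
      \<le> (\<integral>\<^sup>+t. (\<Sum>m\<in>M_set r. G t * indicator (right_cell r m) t)
          + (\<Sum>m<r div 2. G t * indicator (left_cell r m) t) \<partial>lborel)"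
  proof (intro nn_integral_mono)
    fix t
    have "G t * indicator {0..pi} t \<le> G t * ((\<Sum>m\<in>M_set r. indicator (right_cell r m) t)
        + (\<Sum>m<r div 2. indicator (left_cell r m) t))"
      by (rule mult_left_mono[OF indicator_le_sum_cells[OF r]]) simp
    then show "G t * indicator {0..pi} t \<le> (\<Sum>m\<in>M_set r. G t * indicator (right_cell r m) t)
        + (\<Sum>m<r div 2. G t * indicator (left_cell r m) t)"
      by (simp only: distrib_left sum_distrib_left)
  qed
  also have "\<dots> = (\<integral>\<^sup>+t. (\<Sum>m\<in>M_set r. G t * indicator (right_cell r m) t) \<partial>lborel)
      + (\<integral>\<^sup>+t. (\<Sum>m<r div 2. G t * indicator (left_cell r m) t) \<partial>lborel)"
    by (rule nn_integral_add) (auto simp: right_cell_def left_cell_def)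
  also have "\<dots> = (\<Sum>m\<in>M_set r. \<integral>\<^sup>+t\<in>right_cell r m. G t \<partial>lborel) + (\<Sum>m<r div 2. \<integral>\<^sup>+t\<in>left_cell r m. G t \<partial>lborel)"
    by (intro arg_cong2[where f="(+)"] nn_integral_sum) (auto simp: right_cell_def left_cell_def)
  finally show ?thesis .
qed

lemma card_cells_le: "card (M_set r) + r div 2 \<le> r + 1"
proof -
  have "card (M_set r) \<le> r div 2 + 1" by (auto simp: M_set_def)
  then show ?thesis by linarith
qed

context cell_setting
begin

lemma abs_sin_cell:
  fixes s \<sigma> :: real
  assumes \<sigma>: "\<sigma> = 1 \<or> \<sigma> = -1" and s: "0 \<le> s" "s \<le> pi / r"
  shows "\<bar>sin (r * (2 * real j * pi / r + \<sigma> * s) / 2)\<bar> = sin (r * s / 2)"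
  using \<sigma> abs_sin_mult_half_cell[of "real r" s j] r s by auto

lemma cell_coordinates:
  fixes c \<sigma> :: real and d :: "real \<Rightarrow> real"
  assumes f[measurable]: "f \<in> borel_measurable borel"
    and \<sigma>: "\<sigma> = 1 \<or> \<sigma> = -1" and c: "c = 2 * real j * pi / r"
    and inside: "\<And>s. 0 \<le> s \<Longrightarrow> s \<le> pi / r \<Longrightarrow> 0 \<le> c + \<sigma> * s \<and> c + \<sigma> * s \<le> pi"
    and [measurable]: "C \<in> sets borel" "S2 \<in> sets borel" "S3 \<in> sets borel"
    and C: "(\<lambda>s. c + \<sigma> * s) -` C = {0..pi / r}"
    and S2: "(\<lambda>s. c + \<sigma> * s) -` S2 = {0..\<delta>}" and S3: "(\<lambda>s. c + \<sigma> * s) -` S3 = {\<delta>..pi / r}"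
    and d: "\<And>s. d (c + \<sigma> * s) = s"
    and H2: "Lnorm_le p S2 (\<lambda>t. \<bar>phi f x t\<bar> / \<omega> t * \<bar>sin (r * t / 2)\<bar> powr \<beta>) X1"
    and H3: "Lnorm_le p S3 (\<lambda>t. \<bar>phi f x t\<bar> * \<bar>sin (r * t / 2)\<bar> powr \<beta> / (\<omega> t * d t powr \<gamma>)) X2"
  shows "(\<integral>\<^sup>+t\<in>C. ennreal \<bar>phi f x t * mean_kernel a K t\<bar> \<partial>lborel)
      = (\<integral>\<^sup>+s\<in>{0..pi / r}. ennreal (\<bar>phi f x (c + \<sigma> * s)\<bar> * \<bar>mean_kernel a K (c + \<sigma> * s)\<bar>) \<partial>lborel)"
    and "Lnorm_le p {0..\<delta>} (\<lambda>s. \<bar>phi f x (c + \<sigma> * s)\<bar> / W (c + \<sigma> * s) * sin (r * s / 2) powr \<beta>) X1"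
    and "Lnorm_le p {\<delta>..pi / r}
      (\<lambda>s. \<bar>phi f x (c + \<sigma> * s)\<bar> * sin (r * s / 2) powr \<beta> / (W (c + \<sigma> * s) * s powr \<gamma>)) X2"
proof -
  note [measurable] = borel_measurable_phi[OF f, of x]
  have on_cell: "W (c + \<sigma> * s) = \<omega> (c + \<sigma> * s)" "\<bar>sin (r * (c + \<sigma> * s) / 2)\<bar> = sin (r * s / 2)"
    if "0 \<le> s" "s \<le> pi / r" for s :: real
  proof -
    show "W (c + \<sigma> * s) = \<omega> (c + \<sigma> * s)"
      using inside[OF that] pi_gt_zero by (intro modulus_extension_eq) linarith+
    show "\<bar>sin (r * (c + \<sigma> * s) / 2)\<bar> = sin (r * s / 2)"
      using abs_sin_cell[OF \<sigma> that] by (simp add: c)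
  qed
  show "(\<integral>\<^sup>+t\<in>C. ennreal \<bar>phi f x t * mean_kernel a K t\<bar> \<partial>lborel)
      = (\<integral>\<^sup>+s\<in>{0..pi / r}. ennreal (\<bar>phi f x (c + \<sigma> * s)\<bar> * \<bar>mean_kernel a K (c + \<sigma> * s)\<bar>) \<partial>lborel)"
    using nn_integral_lborel_affine[of "\<lambda>t. ennreal \<bar>phi f x t * mean_kernel a K t\<bar>" C \<sigma> c] \<sigma>
    by (auto simp: C abs_mult)
  show "Lnorm_le p {0..\<delta>} (\<lambda>s. \<bar>phi f x (c + \<sigma> * s)\<bar> / W (c + \<sigma> * s) * sin (r * s / 2) powr \<beta>) X1"
    by (rule Lnorm_le_affine_cong[OF \<sigma> _ _ S2 _ H2]) (use \<delta>_le in \<open>auto simp: on_cell\<close>)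
  show "Lnorm_le p {\<delta>..pi / r}
      (\<lambda>s. \<bar>phi f x (c + \<sigma> * s)\<bar> * sin (r * s / 2) powr \<beta> / (W (c + \<sigma> * s) * s powr \<gamma>)) X2"
    by (rule Lnorm_le_affine_cong[OF \<sigma> _ _ S3 _ H3]) (use \<delta>_pos in \<open>auto simp: on_cell d\<close>)
qed

lemma nn_integral_shifted_cell_phi_le:
  fixes c \<sigma> :: real
  assumes f[measurable]: "f \<in> borel_measurable borel" and a: "\<And>k. 0 \<le> a k" "(\<Sum>k\<le>K. a k) \<le> 1"
    and \<sigma>: "\<sigma> = 1 \<or> \<sigma> = -1" and c: "c = 2 * real j * pi / r"
    and range: "\<And>s. 0 \<le> s \<Longrightarrow> s \<le> pi / r \<Longrightarrow> pi / r \<le> c + \<sigma> * s \<and> c + \<sigma> * s \<le> pi"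
    and H1: "dual_norm_le p {0..\<delta>} (\<lambda>s. W s / (s * sin (r * s / 2) powr \<beta>)) Y" and Y: "0 \<le> Y"
    and H2: "Lnorm_le p {0..\<delta>} (\<lambda>s. \<bar>phi f x (c + \<sigma> * s)\<bar> / W (c + \<sigma> * s) * sin (r * s / 2) powr \<beta>) X1"
    and H3: "Lnorm_le p {\<delta>..pi / r}
      (\<lambda>s. \<bar>phi f x (c + \<sigma> * s)\<bar> * sin (r * s / 2) powr \<beta> / (W (c + \<sigma> * s) * s powr \<gamma>)) X2"
  shows "(\<integral>\<^sup>+s\<in>{0..pi / r}. ennreal (\<bar>phi f x (c + \<sigma> * s)\<bar> * \<bar>mean_kernel a K (c + \<sigma> * s)\<bar>) \<partial>lborel)
    \<le> ennreal (near_bound X1 Y + abel_bound a K r * far_bound X2)"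
proof -
  note [measurable] = borel_measurable_phi[OF f, of x]
  have t: "0 < c + \<sigma> * s" "c + \<sigma> * s \<le> pi" if "0 \<le> s" "s \<le> pi / r" for s :: real
    using range[OF that] r_pos by (auto intro: less_le_trans[of 0 "pi / r"])
  note kernel = abs_mean_kernel_far_cell_le[OF a _ _ abs_sin_cell[OF \<sigma>, of _ j, folded c] sin_r_pos]
  show ?thesis
  proof (rule nn_integral_shifted_cell_le[OF _ _ _ _ abel_bound_nonneg[OF a(1)] _ _ _ H1 Y H2 H3])
    fix s :: real
    show "0 \<le> s \<Longrightarrow> s \<le> pi / r \<Longrightarrow> 0 < W (c + \<sigma> * s) \<and> W (c + \<sigma> * s) \<le> \<omega> pi"
      using t[of s] \<omega>_pos modulus_type_mono[OF modulus, of "c + \<sigma> * s" pi] by (simp add: modulus_extension_eq)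
    show "0 < s \<Longrightarrow> s \<le> \<delta> \<Longrightarrow> \<bar>mean_kernel a K (c + \<sigma> * s)\<bar> \<le> 1 / (2 * sin (pi / (2 * r)))"
      using kernel(1) range[of s] \<delta>_le by auto
    show "\<delta> \<le> s \<Longrightarrow> s \<le> pi / r \<Longrightarrow>
        \<bar>mean_kernel a K (c + \<sigma> * s)\<bar> \<le> abel_bound a K r / (4 * sin (pi / (2 * r)) * sin (r * s / 2))"
      using kernel(2) range[of s] \<delta>_pos by auto
  qed auto
qed

lemma nn_integral_right_cell_le:
  assumes f[measurable]: "f \<in> borel_measurable borel" and a: "\<And>k. 0 \<le> a k" "(\<Sum>k\<le>K. a k) \<le> 1"
    and m: "m \<in> M_set r"
    and H1: "dual_norm_le p {0..\<delta>} (\<lambda>s. W s / (s * sin (r * s / 2) powr \<beta>)) Y" and Y: "0 \<le> Y"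
    and H2: "Lnorm_le p {2 * real m * pi / r .. 2 * real m * pi / r + \<delta>}
      (\<lambda>t. \<bar>phi f x t\<bar> / \<omega> t * \<bar>sin (r * t / 2)\<bar> powr \<beta>) X1"
    and H3: "Lnorm_le p {2 * real m * pi / r + \<delta> .. 2 * real m * pi / r + pi / r}
      (\<lambda>t. \<bar>phi f x t\<bar> * \<bar>sin (r * t / 2)\<bar> powr \<beta> / (\<omega> t * (t - 2 * real m * pi / r) powr \<gamma>)) X2"
  shows "(\<integral>\<^sup>+t\<in>right_cell r m. ennreal \<bar>phi f x t * mean_kernel a K t\<bar> \<partial>lborel)
    \<le> ennreal (near_bound X1 Y + abel_bound a K r * far_bound X2)"
proof -
  note [measurable] = borel_measurable_phi[OF f, of x]
  define c where "c = 2 * real m * pi / r"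
  have "2 * m + 1 \<le> r" using m unfolding M_set_def by (auto split: if_splits) presburger+
  then have "(2 * real m + 1) * pi / r \<le> real r * pi / r"
    using r_pos by (intro divide_right_mono mult_right_mono) auto
  then have c_le: "c + pi / r \<le> pi" using r_pos by (simp add: c_def add_divide_distrib algebra_simps)
  have c0: "0 \<le> c" by (simp add: c_def)
  note coord = cell_coordinates[OF f _ c_def, of 1 "right_cell r m" _ _ "\<lambda>t. t - c", OF _ _ _ _ _ _ _ _ _ H2[folded c_def] H3[folded c_def]]
  have I: "(\<integral>\<^sup>+t\<in>right_cell r m. ennreal \<bar>phi f x t * mean_kernel a K t\<bar> \<partial>lborel)
      = (\<integral>\<^sup>+s\<in>{0..pi / r}. ennreal (\<bar>phi f x (c + 1 * s)\<bar> * \<bar>mean_kernel a K (c + 1 * s)\<bar>) \<partial>lborel)"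
    and H2s: "Lnorm_le p {0..\<delta>} (\<lambda>s. \<bar>phi f x (c + 1 * s)\<bar> / W (c + 1 * s) * sin (r * s / 2) powr \<beta>) X1"
    and H3s: "Lnorm_le p {\<delta>..pi / r}
      (\<lambda>s. \<bar>phi f x (c + 1 * s)\<bar> * sin (r * s / 2) powr \<beta> / (W (c + 1 * s) * s powr \<gamma>)) X2"
    by (rule coord; use c0 c_le in \<open>auto simp: right_cell_def c_def\<close>)+
  show ?thesis
  proof (cases "m = 0")
    case True
    then have "c = 0" by (simp add: c_def)
    have "(\<integral>\<^sup>+s\<in>{0..pi / r}. ennreal (\<bar>phi f x s\<bar> * \<bar>mean_kernel a K s\<bar>) \<partial>lborel)
        \<le> ennreal (near_bound X1 Y + abel_bound a K r * far_bound X2)"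
      using H2s H3s abs_mean_kernel_first_cell_le[OF a] \<delta>_pos \<delta>_le unfolding \<open>c = 0\<close>
      by (intro nn_integral_first_cell_le[OF _ _ _ abel_bound_nonneg[OF a(1)] _ _ H1 Y]) auto
    then show ?thesis using I by (simp add: \<open>c = 0\<close>)
  next
    case False
    then have "2 * pi / r \<le> c" using r_pos by (simp add: c_def field_simps)
    then show ?thesis
      unfolding I using c_le \<delta>_pos
      by (intro nn_integral_shifted_cell_phi_le[OF f a _ c_def _ H1 Y H2s H3s]) auto
  qed
qed

lemma nn_integral_left_cell_le:
  assumes f[measurable]: "f \<in> borel_measurable borel" and a: "\<And>k. 0 \<le> a k" "(\<Sum>k\<le>K. a k) \<le> 1"
    and m: "m < r div 2"
    and H1: "dual_norm_le p {0..\<delta>} (\<lambda>s. W s / (s * sin (r * s / 2) powr \<beta>)) Y" and Y: "0 \<le> Y"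
    and H2: "Lnorm_le p {2 * real (m + 1) * pi / r - \<delta> .. 2 * real (m + 1) * pi / r}
      (\<lambda>t. \<bar>phi f x t\<bar> / \<omega> t * \<bar>sin (r * t / 2)\<bar> powr \<beta>) X1"
    and H3: "Lnorm_le p {2 * real (m + 1) * pi / r - pi / r .. 2 * real (m + 1) * pi / r - \<delta>}
      (\<lambda>t. \<bar>phi f x t\<bar> * \<bar>sin (r * t / 2)\<bar> powr \<beta> / (\<omega> t * (2 * real (m + 1) * pi / r - t) powr \<gamma>)) X2"
  shows "(\<integral>\<^sup>+t\<in>left_cell r m. ennreal \<bar>phi f x t * mean_kernel a K t\<bar> \<partial>lborel)
    \<le> ennreal (near_bound X1 Y + abel_bound a K r * far_bound X2)"
proof -
  note [measurable] = borel_measurable_phi[OF f, of x]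
  define c where "c = 2 * real (m + 1) * pi / r"
  have "2 * (m + 1) \<le> r" using m by presburger
  then have "2 * real (m + 1) \<le> real r" by (metis of_nat_le_iff of_nat_mult of_nat_numeral)
  then have "2 * real (m + 1) * pi / r \<le> real r * pi / r"
    using r_pos by (intro divide_right_mono mult_right_mono) auto
  then have c_le: "c \<le> pi" using r_pos by (simp add: c_def)
  have c_ge: "2 * pi / r \<le> c" using r_pos by (simp add: c_def field_simps)
  note coord = cell_coordinates[OF f _ c_def, of "-1" "left_cell r m" _ _ "\<lambda>t. c - t", OF _ _ _ _ _ _ _ _ _ H2[folded c_def] H3[folded c_def]]
  have I: "(\<integral>\<^sup>+t\<in>left_cell r m. ennreal \<bar>phi f x t * mean_kernel a K t\<bar> \<partial>lborel)
      = (\<integral>\<^sup>+s\<in>{0..pi / r}. ennreal (\<bar>phi f x (c + -1 * s)\<bar> * \<bar>mean_kernel a K (c + -1 * s)\<bar>) \<partial>lborel)"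
    and H2s: "Lnorm_le p {0..\<delta>} (\<lambda>s. \<bar>phi f x (c + -1 * s)\<bar> / W (c + -1 * s) * sin (r * s / 2) powr \<beta>) X1"
    and H3s: "Lnorm_le p {\<delta>..pi / r}
      (\<lambda>s. \<bar>phi f x (c + -1 * s)\<bar> * sin (r * s / 2) powr \<beta> / (W (c + -1 * s) * s powr \<gamma>)) X2"
    by (rule coord; use c_le c_ge in \<open>auto simp: left_cell_def c_def field_simps\<close>)+
  show ?thesis
    unfolding I using c_le c_ge \<delta>_pos
    by (intro nn_integral_shifted_cell_phi_le[OF f a _ c_def _ H1 Y H2s H3s]) auto
qed

lemma abs_sum_mean_minus_le:
  fixes f :: "real \<Rightarrow> real" and a :: "nat \<Rightarrow> real"
  assumes f[measurable]: "f \<in> borel_measurable borel" and per: "\<And>u. f (u + 2*pi) = f u"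
    and fi: "set_integrable lborel {-pi..pi} f" and a: "\<And>k. 0 \<le> a k" "(\<Sum>k\<le>K. a k) \<le> 1"
    and H1: "dual_norm_le p {0..\<delta>} (\<lambda>t. \<omega> t / (t * sin (r * t / 2) powr \<beta>)) Y" and Y: "0 \<le> Y"
    and X: "0 \<le> X1" "0 \<le> X2"
    and right: "\<And>m. m \<in> M_set r \<Longrightarrow>
       Lnorm_le p {2 * real m * pi / r .. 2 * real m * pi / r + \<delta>}
         (\<lambda>t. \<bar>phi f x t\<bar> / \<omega> t * \<bar>sin (r * t / 2)\<bar> powr \<beta>) X1 \<and>
       Lnorm_le p {2 * real m * pi / r + \<delta> .. 2 * real m * pi / r + pi / r}
         (\<lambda>t. \<bar>phi f x t\<bar> * \<bar>sin (r * t / 2)\<bar> powr \<beta> / (\<omega> t * (t - 2 * real m * pi / r) powr \<gamma>)) X2"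
    and left: "\<And>m. m < r div 2 \<Longrightarrow>
       Lnorm_le p {2 * real (m + 1) * pi / r - \<delta> .. 2 * real (m + 1) * pi / r}
         (\<lambda>t. \<bar>phi f x t\<bar> / \<omega> t * \<bar>sin (r * t / 2)\<bar> powr \<beta>) X1 \<and>
       Lnorm_le p {2 * real (m + 1) * pi / r - pi / r .. 2 * real (m + 1) * pi / r - \<delta>}
         (\<lambda>t. \<bar>phi f x t\<bar> * \<bar>sin (r * t / 2)\<bar> powr \<beta> / (\<omega> t * (2 * real (m + 1) * pi / r - t) powr \<gamma>)) X2"
  shows "\<bar>\<Sum>k\<le>K. a k * (fourier_partial_sum f k x - f x)\<bar>
    \<le> (r + 1) / pi * (near_bound X1 Y + abel_bound a K r * far_bound X2)"
proof -
  note [measurable] = borel_measurable_phi[OF f, of x]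
  define b where "b = near_bound X1 Y + abel_bound a K r * far_bound X2"
  have b: "0 \<le> b"
    using near_far_bound_nonneg[OF X(1) Y] near_far_bound_nonneg[OF X(2) Y] abel_bound_nonneg[OF a(1)]
    by (simp add: b_def)
  have H1W: "dual_norm_le p {0..\<delta>} (\<lambda>s. W s / (s * sin (r * s / 2) powr \<beta>)) Y"
    using H1 \<delta>_le pi_div_r_le pi_gt_zero
    by (subst dual_norm_le_cong[where g'="\<lambda>t. \<omega> t / (t * sin (r * t / 2) powr \<beta>)"])
      (auto simp: modulus_extension_eq)
  note rep = sum_mean_minus_eq_integral[OF f per fi, of x a K]
  have "ennreal \<bar>LBINT t:{0..pi}. phi f x t * mean_kernel a K t\<bar>
      \<le> (\<integral>\<^sup>+t\<in>{0..pi}. ennreal \<bar>phi f x t * mean_kernel a K t\<bar> \<partial>lborel)"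
    using rep by (intro abs_set_integral_le_nn_integral) auto
  also have "\<dots> \<le> (\<Sum>m\<in>M_set r. \<integral>\<^sup>+t\<in>right_cell r m. ennreal \<bar>phi f x t * mean_kernel a K t\<bar> \<partial>lborel)
      + (\<Sum>m<r div 2. \<integral>\<^sup>+t\<in>left_cell r m. ennreal \<bar>phi f x t * mean_kernel a K t\<bar> \<partial>lborel)"
    by (rule nn_integral_le_sum_cells[OF r]) measurable
  also have "\<dots> \<le> (\<Sum>m\<in>M_set r. ennreal b) + (\<Sum>m<r div 2. ennreal b)"
    unfolding b_def using right left
    by (intro add_mono sum_mono nn_integral_right_cell_le[OF f a _ H1W Y]
        nn_integral_left_cell_le[OF f a _ H1W Y]) auto
  also have "\<dots> = ennreal ((card (M_set r) + r div 2) * b)"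
    using b by (simp add: ennreal_mult' ennreal_of_nat_eq_real_of_nat distrib_right)
  also have "\<dots> \<le> ennreal ((r + 1) * b)"
    using card_cells_le[of r] b by (intro ennreal_leI mult_right_mono) linarith+
  finally have "\<bar>LBINT t:{0..pi}. phi f x t * mean_kernel a K t\<bar> \<le> (r + 1) * b"
    using b by (subst (asm) ennreal_le_iff) auto
  then show ?thesis
    using rep by (simp add: b_def abs_divide divide_right_mono)
qed

lemma r_mult_\<delta>: "r * \<delta> = pi / N"
  using r_pos N by (simp add: \<delta>_def)

lemma \<omega>_pi_le: "\<omega> pi \<le> 2 * N * \<omega> (pi / N)"
  using modulus_type_mult_le[OF modulus, of "pi / N" N] N by simp

lemma \<omega>_pi_div_N_le: "\<omega> (pi / N) \<le> 2 * r * \<omega> \<delta>"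
  using modulus_type_mult_le[OF modulus, of \<delta> "real r"] r_mult_\<delta> \<delta>_pos r N
  by (simp add: field_simps mult_le_cancel_left1)

lemma \<omega>_\<delta>_le: "\<omega> \<delta> \<le> \<omega> (pi / N)"
proof -
  have "1 * N \<le> r * N" using N r by (intro mult_right_mono) auto
  then have "\<delta> \<le> pi / N" unfolding \<delta>_def using N by (intro divide_left_mono) auto
  moreover have "pi / N \<le> 2 * pi" using N by (simp add: field_simps)
  ultimately show ?thesis using \<delta>_pos by (intro modulus_type_mono[OF modulus]) auto
qed

lemma \<omega>_pi_div_N_pos: "0 < \<omega> (pi / N)"
  using \<omega>_pos N by (simp add: field_simps)

end

section \<open>The estimate for a fixed row of the matrix\<close>

context cell_setting
begin

lemma near_bound_le:
  assumes C: "0 < C" and A: "1 \<le> C * N * A"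
  shows "near_bound (C * N powr (-1/p)) (C * N powr (\<beta> + 1/p) * \<omega> (pi / N))
    \<le> (pi / 2 + 4 * pi / sin (pi / (2 * r))) * C ^ 3 * N powr (\<beta> + 1/p + 1) * A * \<omega> (pi / N)"
proof -
  define w where "w = \<omega> (pi / N)"
  define s where "s = sin (pi / (2 * r))"
  have w: "0 < w" using \<omega>_pi_div_N_pos by (simp add: w_def)
  have s: "0 < s" using sin_pi_div_2r_pos by (simp add: s_def)
  have A0: "0 \<le> A"
  proof (rule ccontr)
    assume "\<not> 0 \<le> A"
    then have "C * N * A \<le> 0" using C N by (simp add: mult_nonneg_nonpos)
    then show False using A by simp
  qed
  have "\<omega> pi * \<delta> \<le> 2 * N * (2 * r * \<omega> \<delta>) * \<delta>"
    using \<omega>_pi_le \<omega>_pi_div_N_le \<delta>_pos N by (intro mult_right_mono order_trans[OF \<omega>_pi_le] mult_left_mono) auto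
  also have "\<dots> = 4 * pi * \<omega> \<delta>"
    using r_mult_\<delta> N by (simp add: field_simps)
  finally have coefficient: "\<omega> pi * \<delta> / (s * \<omega> \<delta>) \<le> 4 * pi / s"
    using s \<omega>_\<delta>_pos by (simp add: field_simps)
  have "C * N powr (-1/p) * (C * N powr (\<beta> + 1/p) * w) = C^2 * N powr \<beta> * w"
    using N by (simp add: power2_eq_square powr_add[symmetric] algebra_simps)
  also have "\<dots> \<le> C^2 * N powr \<beta> * w * (C * N * A)"
    using mult_left_mono[OF A, of "C^2 * N powr \<beta> * w"] w by simp
  also have "\<dots> = C^3 * N powr (\<beta> + 1) * A * w"
    using N by (simp add: powr_add power3_eq_cube power2_eq_square algebra_simps)
  also have "\<dots> \<le> C^3 * N powr (\<beta> + 1/p + 1) * A * w"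
    using N p C A0 w by (intro mult_right_mono mult_left_mono powr_mono) auto
  finally have product: "C * N powr (-1/p) * (C * N powr (\<beta> + 1/p) * w) \<le> C^3 * N powr (\<beta> + 1/p + 1) * A * w" .
  have "near_bound (C * N powr (-1/p)) (C * N powr (\<beta> + 1/p) * w)
      \<le> (pi / 2 + 4 * pi / s) * (C^3 * N powr (\<beta> + 1/p + 1) * A * w)"
    unfolding near_bound_def s_def[symmetric]
  proof (rule mult_mono)
    show "pi / 2 + \<omega> pi * \<delta> / (s * \<omega> \<delta>) \<le> pi / 2 + 4 * pi / s"
      using coefficient by linarith
  qed (use product s C w in auto)
  then show ?thesis by (simp add: w_def s_def mult.assoc)
qed

lemma \<delta>_powr_mult_N_powr:
  "\<delta> powr (\<epsilon> + 1 - 1/p) * N powr \<gamma> = (pi / r) powr (\<gamma> - \<beta> - 1/p) * N powr (\<beta> + 1/p)"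
proof -
  have "\<delta> powr (\<gamma> - \<beta> - 1/p) = ((pi / r) / N) powr (\<gamma> - \<beta> - 1/p)"
    by (simp add: \<delta>_def)
  also have "\<dots> = (pi / r) powr (\<gamma> - \<beta> - 1/p) / N powr (\<gamma> - \<beta> - 1/p)"
    by (rule powr_divide)
  finally have "\<delta> powr (\<gamma> - \<beta> - 1/p) = (pi / r) powr (\<gamma> - \<beta> - 1/p) / N powr (\<gamma> - \<beta> - 1/p)" .
  moreover have "N powr \<gamma> / N powr (\<gamma> - \<beta> - 1/p) = N powr (\<beta> + 1/p)"
    by (simp add: powr_diff[symmetric])
  ultimately show ?thesis by (simp add: \<epsilon>_def times_divide_eq_right[symmetric])
qed

lemma far_bound_le:
  assumes C: "0 \<le> C"
  shows "far_bound (C * N powr \<gamma>) \<le> (r / 2 + 1 / (2 * sin (pi / (2 * r)))) * (pi / r) powr (1 + \<gamma> - 1/p)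
    * powr_norm_const p \<epsilon> * C * N powr (\<beta> + 1/p + 1) * \<omega> (pi / N)"
proof -
  define w where "w = \<omega> (pi / N)"
  define s where "s = sin (pi / (2 * r))"
  define K where "K = (pi / r) powr (1 + \<beta>) * powr_norm_const p \<epsilon> * C"
  have s: "0 < s" using sin_pi_div_2r_pos by (simp add: s_def)
  have K: "0 \<le> K" using C powr_norm_const_nonneg by (simp add: K_def)
  have "pi * \<omega> \<delta> / (2 * \<delta>) = r * N / 2 * \<omega> \<delta>"
    using r_pos N by (simp add: \<delta>_def field_simps)
  also have "\<dots> \<le> r * N / 2 * w"
    using \<omega>_\<delta>_le N by (intro mult_left_mono) (auto simp: w_def)
  finally have "pi * \<omega> \<delta> / (2 * \<delta>) + \<omega> pi / (4 * s) \<le> r * N / 2 * w + 2 * N * w / (4 * s)"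
    using \<omega>_pi_le s by (intro add_mono divide_right_mono) (auto simp: w_def)
  also have "\<dots> = (r / 2 + 1 / (2 * s)) * N * w"
    using s by (simp add: field_simps)
  finally have coefficient: "pi * \<omega> \<delta> / (2 * \<delta>) + \<omega> pi / (4 * s) \<le> (r / 2 + 1 / (2 * s)) * N * w" .
  have "far_bound (C * N powr \<gamma>)
      = (pi * \<omega> \<delta> / (2 * \<delta>) + \<omega> pi / (4 * s)) * K * (\<delta> powr (\<epsilon> + 1 - 1/p) * N powr \<gamma>)"
    by (simp add: far_bound_def K_def s_def)
  also have "\<dots> \<le> (r / 2 + 1 / (2 * s)) * N * w * K * (\<delta> powr (\<epsilon> + 1 - 1/p) * N powr \<gamma>)"
    using coefficient K by (intro mult_right_mono) auto
  also have "\<dots> = (r / 2 + 1 / (2 * s)) * ((pi / r) powr (1 + \<beta>) * (pi / r) powr (\<gamma> - \<beta> - 1/p))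
      * powr_norm_const p \<epsilon> * C * (N * N powr (\<beta> + 1/p)) * w"
    unfolding \<delta>_powr_mult_N_powr by (simp add: K_def)
  also have "\<dots> = (r / 2 + 1 / (2 * s)) * (pi / r) powr (1 + \<gamma> - 1/p)
      * powr_norm_const p \<epsilon> * C * N powr (\<beta> + 1/p + 1) * w"
  proof -
    have "(pi / r) powr (1 + \<beta>) * (pi / r) powr (\<gamma> - \<beta> - 1/p) = (pi / r) powr (1 + \<gamma> - 1/p)"
      by (simp add: powr_add[symmetric] algebra_simps)
    moreover have "N * N powr (\<beta> + 1/p) = N powr (\<beta> + 1/p + 1)"
      using N by (simp add: powr_add)
    ultimately show ?thesis by (simp only:)
  qed
  finally show ?thesis by (simp add: w_def s_def)
qed

lemma abs_matrix_mean_minus_le: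
  fixes f :: "real \<Rightarrow> real" and a :: "nat \<Rightarrow> real"
  assumes f: "in_Lp p f" and a: "\<And>k. 0 \<le> a k" "a sums 1"
    and summable: "summable (\<lambda>k. a k * fourier_partial_sum f k x)" "summable (\<lambda>k. \<bar>a k - a (k + r)\<bar>)"
    and C: "0 < C" and A: "1 \<le> C * N * (\<Sum>k. \<bar>a k - a (k + r)\<bar>)"
    and H1: "dual_norm_le p {0..\<delta>} (\<lambda>t. \<omega> t / (t * sin (r * t / 2) powr \<beta>))
      (C * N powr (\<beta> + 1/p) * \<omega> (pi / N))"
    and right: "\<forall>m\<in>M_set r.
       Lnorm_le p {2 * real m * pi / r .. 2 * real m * pi / r + \<delta>}
         (\<lambda>t. \<bar>phi f x t\<bar> / \<omega> t * \<bar>sin (r * t / 2)\<bar> powr \<beta>) (C * N powr (-1/p)) \<and>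
       Lnorm_le p {2 * real m * pi / r + \<delta> .. 2 * real m * pi / r + pi / r}
         (\<lambda>t. \<bar>phi f x t\<bar> * \<bar>sin (r * t / 2)\<bar> powr \<beta> / (\<omega> t * (t - 2 * real m * pi / r) powr \<gamma>))
         (C * N powr \<gamma>)"
    and left: "2 \<le> r \<longrightarrow> (\<forall>m\<in>{0..<r div 2}.
       Lnorm_le p {2 * real (m + 1) * pi / r - \<delta> .. 2 * real (m + 1) * pi / r}
         (\<lambda>t. \<bar>phi f x t\<bar> / \<omega> t * \<bar>sin (r * t / 2)\<bar> powr \<beta>) (C * N powr (-1/p)) \<and>
       Lnorm_le p {2 * real (m + 1) * pi / r - pi / r .. 2 * real (m + 1) * pi / r - \<delta>}
         (\<lambda>t. \<bar>phi f x t\<bar> * \<bar>sin (r * t / 2)\<bar> powr \<beta> / (\<omega> t * (2 * real (m + 1) * pi / r - t) powr \<gamma>))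
         (C * N powr \<gamma>))"
  shows "\<bar>(\<Sum>k. a k * fourier_partial_sum f k x) - f x\<bar>
    \<le> approximation_constant C * N powr (\<beta> + 1/p + 1) * (\<Sum>k. \<bar>a k - a (k + r)\<bar>) * \<omega> (pi / N)"
proof -
  define V where "V = (\<Sum>k. \<bar>a k - a (k + r)\<bar>)"
  define w where "w = \<omega> (pi / N)"
  define P where "P = (r + 1) / pi * near_bound (C * N powr (-1/p)) (C * N powr (\<beta> + 1/p) * w)"
  define Q where "Q = (r + 1) / pi * far_bound (C * N powr \<gamma>)"
  have [measurable]: "f \<in> borel_measurable borel" and per: "\<And>u. f (u + 2*pi) = f u"
    using f by (auto simp: in_Lp_def)
  have Q: "0 \<le> Q" using near_far_bound_nonneg(2)[of "C * N powr \<gamma>" 0] C by (simp add: Q_def)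
  have two_le_r: "2 \<le> r" if "m < r div 2" for m using that by linarith
  have sa: "summable a" using a(2) by (rule sums_summable)
  have "\<bar>\<Sum>k\<le>K. a k * (fourier_partial_sum f k x - f x)\<bar> \<le> P + Q * abel_bound a K r" for K
  proof -
    have "(\<Sum>k\<le>K. a k) \<le> 1"
      using sum_le_suminf[OF sa, of "{..K}"] a sums_unique[OF a(2)] by simp
    then have "\<bar>\<Sum>k\<le>K. a k * (fourier_partial_sum f k x - f x)\<bar>
        \<le> (r + 1) / pi * (near_bound (C * N powr (-1/p)) (C * N powr (\<beta> + 1/p) * w)
          + abel_bound a K r * far_bound (C * N powr \<gamma>))"
      using C \<omega>_pi_div_N_pos right left two_le_r unfolding w_def
      by (intro abs_sum_mean_minus_le[OF _ per in_Lp_set_integrable[OF f p] a(1) _ H1]) auto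
    then show ?thesis by (simp add: P_def Q_def algebra_simps)
  qed
  then have "\<bar>(\<Sum>k. a k * fourier_partial_sum f k x) - f x\<bar> \<le> P + Q * (V + (\<Sum>k<r. a k))"
    unfolding V_def by (rule abs_suminf_mean_minus_le[OF a(2) summable])
  also have "\<dots> \<le> P + Q * (2 * V)"
    using sum_block_le_shift_variation[OF a(1) sa summable(2) r, of 0] Q
    by (intro add_left_mono mult_left_mono) (auto simp: V_def atLeast0LessThan)
  also have "\<dots> \<le> (r + 1) / pi * ((pi / 2 + 4 * pi / sin (pi / (2 * r))) * C ^ 3 * N powr (\<beta> + 1/p + 1) * V * w)
      + (r + 1) / pi * ((r / 2 + 1 / (2 * sin (pi / (2 * r)))) * (pi / r) powr (1 + \<gamma> - 1/p)
          * powr_norm_const p \<epsilon> * C * N powr (\<beta> + 1/p + 1) * w) * (2 * V)"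
  proof (intro add_mono mult_right_mono)
    show "P \<le> (r + 1) / pi * ((pi / 2 + 4 * pi / sin (pi / (2 * r))) * C ^ 3 * N powr (\<beta> + 1/p + 1) * V * w)"
      unfolding P_def V_def w_def by (intro mult_left_mono near_bound_le[OF C A]) auto
    show "Q \<le> (r + 1) / pi * ((r / 2 + 1 / (2 * sin (pi / (2 * r)))) * (pi / r) powr (1 + \<gamma> - 1/p)
          * powr_norm_const p \<epsilon> * C * N powr (\<beta> + 1/p + 1) * w)"
      unfolding Q_def w_def using C by (intro mult_left_mono far_bound_le) auto
    show "0 \<le> 2 * V" unfolding V_def using summable(2) by (simp add: suminf_nonneg)
  qed
  also have "\<dots> = approximation_constant C * N powr (\<beta> + 1/p + 1) * V * w"
    using sin_pi_div_2r_pos by (simp add: approximation_constant_def \<epsilon>_def field_simps)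
  finally show ?thesis by (simp add: V_def w_def)
qed

end

theorem theorem1:
  fixes p \<beta> \<gamma> x :: real and r :: nat and f \<omega> :: "real \<Rightarrow> real"
    and a :: "nat \<Rightarrow> nat \<Rightarrow> real"
  assumes hp: "1 \<le> p"
    and h\<beta>: "0 \<le> \<beta>"
    and hr: "1 \<le> r"
    and hf: "in_Lp p f"
    and h\<omega>: "modulus_type \<omega>"
    and h\<omega>pos: "\<forall>t. 0 < t \<and> t \<le> 2*pi \<longrightarrow> 0 < \<omega> t"
    and hA: "summation_matrix a"
    and h\<gamma>: "0 < \<gamma>" "\<gamma> < \<beta> + 1/p"
    and hC: "\<exists>C>0. \<forall>n::nat.
      dual_norm_le p {0 .. pi / (r * (n+1))}
          (\<lambda>t. \<omega> t / (t * sin (r * t / 2) powr \<beta>))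
          (C * (n+1) powr (\<beta> + 1/p) * \<omega> (pi / (n+1)))
      \<and> (\<forall>m\<in>M_set r.
          Lnorm_le p {2*m*pi/r .. 2*m*pi/r + pi/(r*(n+1))}
            (\<lambda>t. \<bar>phi f x t\<bar> / \<omega> t * \<bar>sin (r*t/2)\<bar> powr \<beta>)
            (C * (n+1) powr (-1/p))
        \<and> Lnorm_le p {2*m*pi/r + pi/(r*(n+1)) .. 2*m*pi/r + pi/r}
            (\<lambda>t. \<bar>phi f x t\<bar> * \<bar>sin (r*t/2)\<bar> powr \<beta> / (\<omega> t * (t - 2*m*pi/r) powr \<gamma>))
            (C * (n+1) powr \<gamma>))
      \<and> (2 \<le> r \<longrightarrow> (\<forall>m\<in>{0 ..< r div 2}.
          Lnorm_le p {2*(m+1)*pi/r - pi/(r*(n+1)) .. 2*(m+1)*pi/r}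
            (\<lambda>t. \<bar>phi f x t\<bar> / \<omega> t * \<bar>sin (r*t/2)\<bar> powr \<beta>)
            (C * (n+1) powr (-1/p))
        \<and> Lnorm_le p {2*(m+1)*pi/r - pi/r .. 2*(m+1)*pi/r - pi/(r*(n+1))}
            (\<lambda>t. \<bar>phi f x t\<bar> * \<bar>sin (r*t/2)\<bar> powr \<beta> / (\<omega> t * (2*(m+1)*pi/r - t) powr \<gamma>))
            (C * (n+1) powr \<gamma>)))
      \<and> 1 \<le> C * (\<Sum>l=0..n. \<Sum>k=l..r+l-1. a n k)"
  shows "\<exists>C'. \<forall>n::nat.
      summable (\<lambda>k. a n k * fourier_partial_sum f k x)
      \<and> summable (\<lambda>k. \<bar>a n k - a n (k + r)\<bar>)
      \<longrightarrow> \<bar>T_mean a f n x - f x\<bar>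
          \<le> C' * (n+1) powr (\<beta> + 1/p + 1) * A_var a n r * \<omega> (pi / (n+1))"
  using hC
  apply (elim exE conjE)
  subgoal premises prems for C
  proof -
    interpret modulus_setting p \<beta> \<gamma> r \<omega>
      using hp h\<beta> h\<gamma> hr h\<omega> h\<omega>pos by unfold_locales auto
    show ?thesis
    proof (intro exI[of _ "approximation_constant C"] allI impI)
      fix n :: nat
      assume summable: "summable (\<lambda>k. a n k * fourier_partial_sum f k x)
        \<and> summable (\<lambda>k. \<bar>a n k - a n (k + r)\<bar>)"
      interpret cell_setting p \<beta> \<gamma> r \<omega> "real n + 1"
        using hp h\<beta> h\<gamma> hr h\<omega> h\<omega>pos by unfold_locales auto
      have row: "\<And>k. 0 \<le> a n k" "a n sums 1"
        using hA by (auto simp: summation_matrix_def)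
      have e: "real (n + 1) = real n + 1" "pi / real (r * (n + 1)) = \<delta>" "\<And>m. real (2 * m) = 2 * real m"
        by (simp_all only: \<delta>_def of_nat_mult of_nat_add of_nat_1 of_nat_numeral)
      note hyp = prems(2)[rule_format, of n, unfolded e]
      have "1 \<le> C * (real n + 1) * (\<Sum>k. \<bar>a n k - a n (k + r)\<bar>)"
        using hyp prems(1) summable
        by (intro one_le_mult_shift_variation[OF row(1) sums_summable[OF row(2)] _ hr]) auto
      then show "\<bar>T_mean a f n x - f x\<bar> \<le> approximation_constant C * real (n + 1) powr (\<beta> + 1/p + 1)
          * A_var a n r * \<omega> (pi / real (n + 1))"
        unfolding T_mean_def A_var_def e(1) using summable prems(1)
        by (intro abs_matrix_mean_minus_le[OF hf row]) (use hyp in blast)+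
    qed
  qed
  done

end
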